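(* Let $X$ be an algebraic variety. The assignment $U\mapsto\mathcal{T}(U)$ to every Zariski open $U\subset X$, together with the restriction of functions $\mathcal{T}(V)\to\mathcal{T}(U)$ for Zariski open $U\subset V$, is a sheaf on $X$ (in the Zariski topology).
   Context: An affine algebraic variety is a topological space with a sheaf of real-valued functions isomorphic as a ringed space (via a "closed embedding" $i$) to an algebraic set $Y\subset\mathbb{R}^n$ (common zero locus of real polynomials) with its Zariski topology and sheaf of regular functions. An algebraic variety is a topological space with a sheaf of real-valued functions admitting a finite open cover by affine algebraic varieties; Zariski open subsets of (affine) algebraic varieties are (affine) algebraic varieties. A tempered function on $\mathbb{R}^n$ is a smooth function all of whose partial derivatives are bounded by $C(1+|x|^2)^N$ for some $C,N$. For affine $X$, $\mathcal{T}(X)$ is the space of $f:X\to\mathbb{R}$ such that $f\circ i^{-1}$ is the restriction to $i(X)$ of a tempered function on $\mathbb{R}^n$ (independent of $i$). For a general algebraic variety $X$, $\mathcal{T}(X)$ is the set of $t:X\to\mathbb{R}$ such that $t|_{X_i}\in\mathcal{T}(X_i)$ for every member $X_i$ of some (equivalently every) finite Zariski open cover of $X$ by affine algebraic varieties. *)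

theory Defs
  imports "HOL-Analysis.Analysis" "HOL-Library.FuncSet"
begin

text \<open>R^n is represented inside nat => real as the points whose coordinates
  with index >= n vanish.\<close>
definition euclid :: "nat \<Rightarrow> (nat \<Rightarrow> real) set" where
  "euclid n = {x. \<forall>i\<ge>n. x i = 0}"

inductive_set poly_fun :: "nat \<Rightarrow> ((nat \<Rightarrow> real) \<Rightarrow> real) set" for n :: nat where
  const: "(\<lambda>x. c) \<in> poly_fun n"
| var: "i < n \<Longrightarrow> (\<lambda>x. x i) \<in> poly_fun n"
| add: "p \<in> poly_fun n \<Longrightarrow> q \<in> poly_fun n \<Longrightarrow> (\<lambda>x. p x + q x) \<in> poly_fun n"
| mult: "p \<in> poly_fun n \<Longrightarrow> q \<in> poly_fun n \<Longrightarrow> (\<lambda>x. p x * q x) \<in> poly_fun n"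

definition zariski_closed_in :: "nat \<Rightarrow> (nat \<Rightarrow> real) set \<Rightarrow> (nat \<Rightarrow> real) set \<Rightarrow> bool" where
  "zariski_closed_in n Y Z \<longleftrightarrow> (\<exists>P \<subseteq> poly_fun n. Z = {y \<in> Y. \<forall>p\<in>P. p y = 0})"

definition zariski_open_in :: "nat \<Rightarrow> (nat \<Rightarrow> real) set \<Rightarrow> (nat \<Rightarrow> real) set \<Rightarrow> bool" where
  "zariski_open_in n Y U \<longleftrightarrow> U \<subseteq> Y \<and> zariski_closed_in n Y (Y - U)"

definition algebraic_set :: "nat \<Rightarrow> (nat \<Rightarrow> real) set \<Rightarrow> bool" where
  "algebraic_set n Y \<longleftrightarrow> zariski_closed_in n (euclid n) Y"

definition regular_on :: "nat \<Rightarrow> (nat \<Rightarrow> real) set \<Rightarrow> (nat \<Rightarrow> real) set \<Rightarrow> ((nat \<Rightarrow> real) \<Rightarrow> real) \<Rightarrow> bool" where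
  "regular_on n Y W f \<longleftrightarrow>
     (\<forall>x\<in>W. \<exists>N. zariski_open_in n Y N \<and> x \<in> N \<and> N \<subseteq> W \<and>
        (\<exists>p\<in>poly_fun n. \<exists>q\<in>poly_fun n. \<forall>y\<in>N. q y \<noteq> 0 \<and> f y = p y / q y))"

definition sheaf_fun :: "'a topology \<Rightarrow> ('a set \<Rightarrow> ('a \<Rightarrow> real) set) \<Rightarrow> bool" where
  "sheaf_fun X F \<longleftrightarrow>
     (\<forall>U. openin X U \<longrightarrow> F U \<subseteq> extensional U) \<and>
     (\<forall>U V f. openin X U \<and> openin X V \<and> U \<subseteq> V \<and> f \<in> F V \<longrightarrow> restrict f U \<in> F U) \<and>
     (\<forall>V \<U> f g. openin X V \<and> (\<forall>U\<in>\<U>. openin X U) \<and> \<Union>\<U> = V \<and> f \<in> F V \<and> g \<in> F V \<and>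
        (\<forall>U\<in>\<U>. restrict f U = restrict g U) \<longrightarrow> f = g) \<and>
     (\<forall>V \<U> s. openin X V \<and> (\<forall>U\<in>\<U>. openin X U) \<and> \<Union>\<U> = V \<and> (\<forall>U\<in>\<U>. s U \<in> F U) \<and>
        (\<forall>U\<in>\<U>. \<forall>U'\<in>\<U>. restrict (s U) (U \<inter> U') = restrict (s U') (U \<inter> U')) \<longrightarrow>
        (\<exists>f\<in>F V. \<forall>U\<in>\<U>. restrict f U = s U))"

text \<open>i is an isomorphism of ringed spaces from (X, OX) onto the algebraic set Y in R^n
  with its Zariski topology and sheaf of regular functions.\<close>
definition affine_embedding :: "'a topology \<Rightarrow> ('a set \<Rightarrow> ('a \<Rightarrow> real) set) \<Rightarrow> nat \<Rightarrow> (nat \<Rightarrow> real) set \<Rightarrow> ('a \<Rightarrow> (nat \<Rightarrow> real)) \<Rightarrow> bool" where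
  "affine_embedding X OX n Y i \<longleftrightarrow>
     algebraic_set n Y \<and> bij_betw i (topspace X) Y \<and>
     (\<forall>W. W \<subseteq> topspace X \<longrightarrow> (openin X W \<longleftrightarrow> zariski_open_in n Y (i ` W))) \<and>
     (\<forall>W f. openin X W \<longrightarrow>
        (f \<in> OX W \<longleftrightarrow> f \<in> extensional W \<and> regular_on n Y (i ` W) (\<lambda>y. f (inv_into (topspace X) i y))))"

definition affine_variety :: "'a topology \<Rightarrow> ('a set \<Rightarrow> ('a \<Rightarrow> real) set) \<Rightarrow> bool" where
  "affine_variety X OX \<longleftrightarrow> (\<exists>n Y i. affine_embedding X OX n Y i)"

text \<open>Restriction to an open U: the subspace topology, with the same sheaf (queried only on opens inside U).\<close>
definition algebraic_variety :: "'a topology \<Rightarrow> ('a set \<Rightarrow> ('a \<Rightarrow> real) set) \<Rightarrow> bool" where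
  "algebraic_variety X OX \<longleftrightarrow> sheaf_fun X OX \<and>
     (\<exists>\<U>. finite \<U> \<and> \<Union>\<U> = topspace X \<and>
        (\<forall>U\<in>\<U>. openin X U \<and> affine_variety (subtopology X U) OX))"

definition sqnorm :: "nat \<Rightarrow> (nat \<Rightarrow> real) \<Rightarrow> real" where
  "sqnorm n x = (\<Sum>i<n. (x i)\<^sup>2)"

definition cont_on_euclid :: "nat \<Rightarrow> ((nat \<Rightarrow> real) \<Rightarrow> real) \<Rightarrow> bool" where
  "cont_on_euclid n g \<longleftrightarrow>
     (\<forall>x\<in>euclid n. \<forall>e>0. \<exists>d>0. \<forall>y\<in>euclid n. sqrt (sqnorm n (\<lambda>i. y i - x i)) < d \<longrightarrow> \<bar>g y - g x\<bar> < e)"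

text \<open>F is tempered on R^n: D alpha is the iterated partial derivative of F along
  the multi-index list alpha (D (i # alpha) = partial_i (D alpha)); all of them
  exist, are continuous (so F is smooth) and are polynomially bounded.\<close>
definition tempered :: "nat \<Rightarrow> ((nat \<Rightarrow> real) \<Rightarrow> real) \<Rightarrow> bool" where
  "tempered n F \<longleftrightarrow>
     (\<exists>D :: nat list \<Rightarrow> (nat \<Rightarrow> real) \<Rightarrow> real. D [] = F \<and>
        (\<forall>\<alpha>. set \<alpha> \<subseteq> {..<n} \<longrightarrow>
           cont_on_euclid n (D \<alpha>) \<and>
           (\<forall>i<n. \<forall>x\<in>euclid n. ((\<lambda>t. D \<alpha> (x(i := x i + t))) has_real_derivative D (i # \<alpha>) x) (at 0)) \<and>
           (\<exists>C N. \<forall>x\<in>euclid n. \<bar>D \<alpha> x\<bar> \<le> C * (1 + sqnorm n x) ^ N)))"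

definition tempered_affine :: "'a topology \<Rightarrow> ('a set \<Rightarrow> ('a \<Rightarrow> real) set) \<Rightarrow> ('a \<Rightarrow> real) \<Rightarrow> bool" where
  "tempered_affine X OX f \<longleftrightarrow>
     (\<exists>n Y i. affine_embedding X OX n Y i \<and>
        (\<exists>F. tempered n F \<and> (\<forall>x\<in>topspace X. f x = F (i x))))"

definition tempered_fns :: "'a topology \<Rightarrow> ('a set \<Rightarrow> ('a \<Rightarrow> real) set) \<Rightarrow> ('a \<Rightarrow> real) set" where
  "tempered_fns X OX =
     {t \<in> extensional (topspace X). \<exists>\<U>. finite \<U> \<and> \<Union>\<U> = topspace X \<and>
        (\<forall>U\<in>\<U>. openin X U \<and> affine_variety (subtopology X U) OX \<and>
                 tempered_affine (subtopology X U) OX (restrict t U))}"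

end

theory Submission
  imports Defs
begin

text \<open>Being tempered is a local property that survives shrinking: a Zariski open subset of an
  affine chart W is a finite union of principal opens D(q), each of which is again affine via
  x \<mapsto> (i x, 1 / q (i x)), and a tempered F on W pulls back to the tempered function
  (z, s) \<mapsto> F z on that chart. This gives restrictions. Gluing needs finite covers, which exist
  because algebraic varieties are quasi-compact in the Zariski topology; that is Hilbert's basis
  theorem, proved here for polynomial functions by induction on the number of variables via
  ideals of leading coefficients.\<close>

lemma poly_fun_cong:
  assumes "p \<in> poly_fun n" "\<And>i. i < n \<Longrightarrow> x i = y i"
  shows "p x = p y"
  using assms(1) by induction (auto simp: assms(2))

lemma poly_fun_upd_eq: "p \<in> poly_fun n \<Longrightarrow> p (x(n := c)) = p x"
  by (rule poly_fun_cong) auto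

lemma poly_fun_mono: "p \<in> poly_fun n \<Longrightarrow> n \<le> m \<Longrightarrow> p \<in> poly_fun m"
  by (induction rule: poly_fun.induct) (auto intro: poly_fun.intros)

lemma poly_fun_Suc: "p \<in> poly_fun n \<Longrightarrow> p \<in> poly_fun (Suc n)"
  by (erule poly_fun_mono) simp

lemma poly_fun_uminus: "p \<in> poly_fun n \<Longrightarrow> (\<lambda>x. - p x) \<in> poly_fun n"
  using poly_fun.mult[OF poly_fun.const[of "-1"], of p] by simp

lemma poly_fun_diff: "p \<in> poly_fun n \<Longrightarrow> q \<in> poly_fun n \<Longrightarrow> (\<lambda>x. p x - q x) \<in> poly_fun n"
  using poly_fun.add[OF _ poly_fun_uminus, of p n q] by simp

lemma poly_fun_sum:
  "finite A \<Longrightarrow> (\<And>a. a \<in> A \<Longrightarrow> f a \<in> poly_fun n) \<Longrightarrow> (\<lambda>x. \<Sum>a\<in>A. f a x) \<in> poly_fun n"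
  by (induction A rule: finite_induct) (auto intro: poly_fun.intros)

lemma poly_fun_power: "p \<in> poly_fun n \<Longrightarrow> (\<lambda>x. p x ^ k) \<in> poly_fun n"
  by (induction k) (auto intro: poly_fun.intros)

lemma poly_fun_0_const: "p \<in> poly_fun 0 \<Longrightarrow> \<exists>c. p = (\<lambda>x. c)"
  by (induction rule: poly_fun.induct) auto

definition is_poly_ideal :: "nat \<Rightarrow> ((nat \<Rightarrow> real) \<Rightarrow> real) set \<Rightarrow> bool" where
  "is_poly_ideal n I \<longleftrightarrow> (\<lambda>x. 0) \<in> I \<and> (\<forall>p\<in>I. \<forall>q\<in>I. (\<lambda>x. p x + q x) \<in> I) \<and>
     (\<forall>g\<in>poly_fun n. \<forall>p\<in>I. (\<lambda>x. g x * p x) \<in> I)"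

lemma is_poly_idealD:
  assumes "is_poly_ideal n I"
  shows "(\<lambda>x. 0) \<in> I" "p \<in> I \<Longrightarrow> q \<in> I \<Longrightarrow> (\<lambda>x. p x + q x) \<in> I"
    "g \<in> poly_fun n \<Longrightarrow> p \<in> I \<Longrightarrow> (\<lambda>x. g x * p x) \<in> I"
  using assms unfolding is_poly_ideal_def by blast+

lemma is_poly_ideal_diff:
  assumes "is_poly_ideal n I" "p \<in> I" "q \<in> I"
  shows "(\<lambda>x. p x - q x) \<in> I"
  using is_poly_idealD(2)[OF assms(1,2) is_poly_idealD(3)[OF assms(1) poly_fun.const[of "-1"] assms(3)]]
  by simp

lemma is_poly_ideal_poly_fun: "is_poly_ideal n (poly_fun n)"
  unfolding is_poly_ideal_def by (auto intro: poly_fun.intros)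

lemma is_poly_ideal_vanishing: "is_poly_ideal n {p. p x = 0}"
  unfolding is_poly_ideal_def by simp

inductive_set poly_ideal :: "nat \<Rightarrow> ((nat \<Rightarrow> real) \<Rightarrow> real) set \<Rightarrow> ((nat \<Rightarrow> real) \<Rightarrow> real) set"
  for n Q where
  zero: "(\<lambda>x. 0) \<in> poly_ideal n Q"
| generator: "q \<in> Q \<Longrightarrow> q \<in> poly_ideal n Q"
| add: "p \<in> poly_ideal n Q \<Longrightarrow> p' \<in> poly_ideal n Q \<Longrightarrow> (\<lambda>x. p x + p' x) \<in> poly_ideal n Q"
| mult: "g \<in> poly_fun n \<Longrightarrow> p \<in> poly_ideal n Q \<Longrightarrow> (\<lambda>x. g x * p x) \<in> poly_ideal n Q"

lemma is_poly_ideal_poly_ideal: "is_poly_ideal n (poly_ideal n Q)"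
  unfolding is_poly_ideal_def by (auto intro: poly_ideal.intros)

lemma poly_ideal_least: "is_poly_ideal n I \<Longrightarrow> Q \<subseteq> I \<Longrightarrow> poly_ideal n Q \<subseteq> I"
proof
  fix p assume "is_poly_ideal n I" "Q \<subseteq> I" "p \<in> poly_ideal n Q"
  then show "p \<in> I"
    by (induction rule: poly_ideal.induct[OF \<open>p \<in> poly_ideal n Q\<close>]) (auto dest: is_poly_idealD)
qed

lemma poly_ideal_mono: "Q \<subseteq> Q' \<Longrightarrow> poly_ideal n Q \<subseteq> poly_ideal n Q'"
  by (rule poly_ideal_least[OF is_poly_ideal_poly_ideal]) (auto intro: poly_ideal.generator)

lemma poly_ideal_subset_poly_fun: "Q \<subseteq> poly_fun n \<Longrightarrow> poly_ideal n Q \<subseteq> poly_fun n"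
  by (rule poly_ideal_least[OF is_poly_ideal_poly_fun])

lemma poly_ideal_vanishes: "p \<in> poly_ideal n Q \<Longrightarrow> \<forall>q\<in>Q. q x = 0 \<Longrightarrow> p x = 0"
  using poly_ideal_least[OF is_poly_ideal_vanishing, of Q x n] by blast

lemma poly_ideal_finite_support: "p \<in> poly_ideal n Q \<Longrightarrow> \<exists>F\<subseteq>Q. finite F \<and> p \<in> poly_ideal n F"
proof (induction rule: poly_ideal.induct)
  case zero then show ?case by (blast intro: poly_ideal.zero)
next
  case (generator q) then show ?case by (blast intro: poly_ideal.generator)
next
  case (add p p')
  then obtain F F' where "F \<subseteq> Q" "finite F" "p \<in> poly_ideal n F" "F' \<subseteq> Q" "finite F'" "p' \<in> poly_ideal n F'"
    by blast
  then show ?case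
    using poly_ideal_mono[of F "F \<union> F'" n] poly_ideal_mono[of F' "F \<union> F'" n]
    by (intro exI[of _ "F \<union> F'"]) (auto intro: poly_ideal.add)
next
  case (mult g p) then show ?case by (blast intro: poly_ideal.mult)
qed

lemma finite_subset_poly_ideal:
  "finite P \<Longrightarrow> P \<subseteq> poly_ideal n Q \<Longrightarrow> \<exists>F\<subseteq>Q. finite F \<and> P \<subseteq> poly_ideal n F"
proof (induction P rule: finite_induct)
  case empty then show ?case by blast
next
  case (insert p P)
  then obtain F F' where "F \<subseteq> Q" "finite F" "P \<subseteq> poly_ideal n F" "F' \<subseteq> Q" "finite F'" "p \<in> poly_ideal n F'"
    using poly_ideal_finite_support by (metis insert_subset)
  then show ?case
    using poly_ideal_mono[of F "F \<union> F'" n] poly_ideal_mono[of F' "F \<union> F'" n]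
    by (intro exI[of _ "F \<union> F'"]) auto
qed

section \<open>Expansion in the last variable\<close>

text \<open>An expansion p = (\<Sum>k<m. c k * x n ^ k) with coefficients in the first n variables;
  it is not unique and m only bounds the degree in x n.\<close>

definition var_expansion ::
    "nat \<Rightarrow> ((nat \<Rightarrow> real) \<Rightarrow> real) \<Rightarrow> nat \<Rightarrow> (nat \<Rightarrow> (nat \<Rightarrow> real) \<Rightarrow> real) \<Rightarrow> bool" where
  "var_expansion n p m c \<longleftrightarrow> (\<forall>k. c k \<in> poly_fun n) \<and> (\<forall>x. p x = (\<Sum>k<m. c k x * x n ^ k))"

lemma var_expansion_zero: "var_expansion n (\<lambda>x. 0) m (\<lambda>k x. 0)"
  unfolding var_expansion_def by (auto intro: poly_fun.const)

lemma var_expansion_add: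
  "var_expansion n p m c \<Longrightarrow> var_expansion n q m c' \<Longrightarrow>
   var_expansion n (\<lambda>x. p x + q x) m (\<lambda>k x. c k x + c' k x)"
  unfolding var_expansion_def by (auto simp: poly_fun.add sum.distrib distrib_right)

lemma var_expansion_mult_left:
  "h \<in> poly_fun n \<Longrightarrow> var_expansion n p m c \<Longrightarrow> var_expansion n (\<lambda>x. h x * p x) m (\<lambda>k x. h x * c k x)"
  unfolding var_expansion_def by (auto simp: poly_fun.mult sum_distrib_left mult.assoc)

lemma var_expansion_pad:
  assumes "var_expansion n p m c" "m \<le> m'"
  shows "var_expansion n p m' (\<lambda>k. if k < m then c k else (\<lambda>x. 0))"
proof -
  have "(\<Sum>k<m'. (if k < m then c k else (\<lambda>x. 0)) x * x n ^ k) = (\<Sum>k<m. c k x * x n ^ k)" for x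
    by (rule sum.mono_neutral_cong_right) (use assms(2) in auto)
  then show ?thesis using assms(1) unfolding var_expansion_def by (auto intro: poly_fun.const)
qed

lemma var_expansion_shift:
  assumes "var_expansion n p m c"
  shows "var_expansion n (\<lambda>x. x n ^ j * p x) (m + j) (\<lambda>k. if j \<le> k then c (k - j) else (\<lambda>x. 0))"
proof -
  have "(\<Sum>k<m + j. (if j \<le> k then c (k - j) else (\<lambda>x. 0)) x * x n ^ k) = x n ^ j * p x" for x
  proof -
    have "(\<Sum>k<m + j. (if j \<le> k then c (k - j) else (\<lambda>x. 0)) x * x n ^ k) =
          (\<Sum>k\<in>{j..<m + j}. c (k - j) x * x n ^ k)"
      by (rule sum.mono_neutral_cong_right) auto
    also have "\<dots> = (\<Sum>k<m. c k x * x n ^ (k + j))"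
      using sum.shift_bounds_nat_ivl[of "\<lambda>k. c (k - j) x * x n ^ k" 0 j m] by (simp add: lessThan_atLeast0)
    also have "\<dots> = x n ^ j * p x"
      using assms unfolding var_expansion_def by (simp add: sum_distrib_left power_add mult_ac)
    finally show ?thesis .
  qed
  then show ?thesis using assms unfolding var_expansion_def by (auto intro: poly_fun.const)
qed

lemma var_expansion_drop_top:
  "var_expansion n p (Suc d) c \<Longrightarrow> (\<And>x. c d x = 0) \<Longrightarrow> var_expansion n p d c"
  unfolding var_expansion_def by simp

definition has_var_expansion :: "nat \<Rightarrow> ((nat \<Rightarrow> real) \<Rightarrow> real) \<Rightarrow> bool" where
  "has_var_expansion n p \<longleftrightarrow> (\<exists>m c. var_expansion n p m c)"

lemma has_var_expansion_add:
  assumes "has_var_expansion n p" "has_var_expansion n q"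
  shows "has_var_expansion n (\<lambda>x. p x + q x)"
proof -
  from assms obtain m c m' c' where "var_expansion n p m c" "var_expansion n q m' c'"
    unfolding has_var_expansion_def by blast
  then have "var_expansion n p (max m m') (\<lambda>k. if k < m then c k else (\<lambda>x. 0))"
    "var_expansion n q (max m m') (\<lambda>k. if k < m' then c' k else (\<lambda>x. 0))"
    by (auto intro: var_expansion_pad)
  from var_expansion_add[OF this] show ?thesis unfolding has_var_expansion_def by blast
qed

lemma has_var_expansion_sum:
  "finite A \<Longrightarrow> (\<And>a. a \<in> A \<Longrightarrow> has_var_expansion n (f a)) \<Longrightarrow>
   has_var_expansion n (\<lambda>x. \<Sum>a\<in>A. f a x)"
proof (induction A rule: finite_induct)
  case empty then show ?case using var_expansion_zero unfolding has_var_expansion_def by auto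
next
  case (insert a A) then show ?case by (auto intro: has_var_expansion_add)
qed

lemma has_var_expansion_mult:
  assumes "has_var_expansion n p" "has_var_expansion n q"
  shows "has_var_expansion n (\<lambda>x. p x * q x)"
proof -
  from assms obtain m c m' c' where p: "var_expansion n p m' c'" and q: "var_expansion n q m c"
    unfolding has_var_expansion_def by blast
  have "has_var_expansion n (\<lambda>x. c k x * (x n ^ k * p x))" for k
  proof -
    have "c k \<in> poly_fun n" using q unfolding var_expansion_def by blast
    from var_expansion_mult_left[OF this var_expansion_shift[OF p, of k]]
    show ?thesis unfolding has_var_expansion_def by blast
  qed
  then have "has_var_expansion n (\<lambda>x. \<Sum>k<m. c k x * (x n ^ k * p x))"
    by (intro has_var_expansion_sum) auto
  moreover have "(\<lambda>x. \<Sum>k<m. c k x * (x n ^ k * p x)) = (\<lambda>x. p x * q x)"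
    using q unfolding var_expansion_def by (auto simp: sum_distrib_left mult_ac)
  ultimately show ?thesis by simp
qed

lemma poly_fun_Suc_has_var_expansion: "p \<in> poly_fun (Suc n) \<Longrightarrow> has_var_expansion n p"
proof (induction rule: poly_fun.induct)
  case (const c)
  have "var_expansion n (\<lambda>x. c) 1 (\<lambda>k x. c)" unfolding var_expansion_def by (auto intro: poly_fun.const)
  then show ?case unfolding has_var_expansion_def by blast
next
  case (var i)
  show ?case
  proof (cases "i < n")
    case True
    have "var_expansion n (\<lambda>x. x i) 1 (\<lambda>k x. x i)"
      unfolding var_expansion_def using True by (auto intro: poly_fun.var)
    then show ?thesis unfolding has_var_expansion_def by blast
  next
    case False
    with var have "i = n" by simp
    then have "var_expansion n (\<lambda>x. x i) 2 (\<lambda>k x. if k = 1 then 1 else 0)"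
      unfolding var_expansion_def by (auto intro: poly_fun.const simp: numeral_2_eq_2)
    then show ?thesis unfolding has_var_expansion_def by blast
  qed
next
  case (add p q) then show ?case using has_var_expansion_add by blast
next
  case (mult p q) then show ?case using has_var_expansion_mult by blast
qed

lemma poly_fun_clear_denominator:
  assumes "p \<in> poly_fun (Suc n)" "q \<in> poly_fun n"
  shows "\<exists>h m. h \<in> poly_fun n \<and> (\<forall>z. q z \<noteq> 0 \<longrightarrow> p (z(n := 1 / q z)) * q z ^ m = h z)"
proof -
  obtain m c where c: "var_expansion n p m c"
    using poly_fun_Suc_has_var_expansion[OF assms(1)] unfolding has_var_expansion_def by blast
  define h where "h z = (\<Sum>k<m. c k z * q z ^ (m - k))" for z
  have "h \<in> poly_fun n" unfolding h_def using c assms(2)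
    by (intro poly_fun_sum poly_fun.mult poly_fun_power) (auto simp: var_expansion_def)
  moreover have "p (z(n := 1 / q z)) * q z ^ m = h z" if "q z \<noteq> 0" for z
  proof -
    have "c k (z(n := 1 / q z)) = c k z" for k using c poly_fun_upd_eq unfolding var_expansion_def by blast
    then have "p (z(n := 1 / q z)) * q z ^ m = (\<Sum>k<m. c k z * (1 / q z) ^ k * q z ^ m)"
      using c unfolding var_expansion_def by (simp add: sum_distrib_right)
    also have "\<dots> = h z" unfolding h_def
    proof (rule sum.cong)
      fix k assume "k \<in> {..<m}"
      then have "q z ^ m = q z ^ k * q z ^ (m - k)" by (simp flip: power_add)
      then show "c k z * (1 / q z) ^ k * q z ^ m = c k z * q z ^ (m - k)"
        using that by (simp add: power_one_over field_simps)
    qed simp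
    finally show ?thesis .
  qed
  ultimately show ?thesis by blast
qed

section \<open>Hilbert's basis theorem\<close>

definition lead_coeffs ::
    "nat \<Rightarrow> ((nat \<Rightarrow> real) \<Rightarrow> real) set \<Rightarrow> nat \<Rightarrow> ((nat \<Rightarrow> real) \<Rightarrow> real) set" where
  "lead_coeffs n I d = {c d | c p. p \<in> I \<and> var_expansion n p (Suc d) c}"

lemma lead_coeffsI: "p \<in> I \<Longrightarrow> var_expansion n p (Suc d) c \<Longrightarrow> c d \<in> lead_coeffs n I d"
  unfolding lead_coeffs_def by blast

lemma lead_coeffsE:
  assumes "g \<in> lead_coeffs n I d"
  obtains p c where "p \<in> I" "var_expansion n p (Suc d) c" "g = c d"
  using assms unfolding lead_coeffs_def by blast

lemma lead_coeffs_subset_poly_fun: "lead_coeffs n I d \<subseteq> poly_fun n"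
  unfolding lead_coeffs_def var_expansion_def by auto

lemma is_poly_ideal_lead_coeffs:
  assumes I: "is_poly_ideal (Suc n) I"
  shows "is_poly_ideal n (lead_coeffs n I d)"
  unfolding is_poly_ideal_def
proof (intro conjI ballI)
  show "(\<lambda>x. 0) \<in> lead_coeffs n I d"
    using lead_coeffsI[OF is_poly_idealD(1)[OF I] var_expansion_zero] by simp
next
  fix g h assume "g \<in> lead_coeffs n I d" "h \<in> lead_coeffs n I d"
  then obtain p c q c' where "p \<in> I" "var_expansion n p (Suc d) c" "g = c d"
    "q \<in> I" "var_expansion n q (Suc d) c'" "h = c' d"
    by (metis lead_coeffsE)
  then show "(\<lambda>x. g x + h x) \<in> lead_coeffs n I d"
    using lead_coeffsI[OF is_poly_idealD(2)[OF I] var_expansion_add] by simp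
next
  fix g h assume g: "g \<in> poly_fun n" and "h \<in> lead_coeffs n I d"
  then obtain p c where "p \<in> I" "var_expansion n p (Suc d) c" "h = c d"
    by (metis lead_coeffsE)
  then show "(\<lambda>x. g x * h x) \<in> lead_coeffs n I d"
    using lead_coeffsI[OF is_poly_idealD(3)[OF I poly_fun_Suc[OF g]] var_expansion_mult_left[OF g]]
    by simp
qed

lemma lead_coeffs_mono:
  assumes I: "is_poly_ideal (Suc n) I" and "d \<le> d'"
  shows "lead_coeffs n I d \<subseteq> lead_coeffs n I d'"
proof
  fix g assume "g \<in> lead_coeffs n I d"
  then obtain p c where p: "p \<in> I" "var_expansion n p (Suc d) c" "g = c d"
    by (rule lead_coeffsE)
  have "(\<lambda>x. x n ^ (d' - d) * p x) \<in> I"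
    using is_poly_idealD(3)[OF I poly_fun_power[OF poly_fun.var] p(1)] by simp
  moreover have "var_expansion n (\<lambda>x. x n ^ (d' - d) * p x) (Suc d')
      (\<lambda>k. if d' - d \<le> k then c (k - (d' - d)) else (\<lambda>x. 0))"
    using var_expansion_shift[OF p(2), of "d' - d"] \<open>d \<le> d'\<close> by simp
  ultimately show "g \<in> lead_coeffs n I d'"
    using lead_coeffsI p(3) \<open>d \<le> d'\<close> by fastforce
qed

lemma lead_coeffs_witnesses:
  assumes "finite S" "\<And>g d. (g, d) \<in> S \<Longrightarrow> g \<in> lead_coeffs n I d"
  shows "\<exists>P\<subseteq>I. finite P \<and> (\<forall>(g, d)\<in>S. g \<in> lead_coeffs n (poly_ideal (Suc n) P) d)"
proof -
  have "\<forall>(g, d)\<in>S. \<exists>p. p \<in> I \<and> (\<exists>c. var_expansion n p (Suc d) c \<and> c d = g)"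
    using assms(2) by (fastforce elim: lead_coeffsE)
  then have "\<exists>w. \<forall>gd\<in>S. w gd \<in> I \<and> (\<exists>c. var_expansion n (w gd) (Suc (snd gd)) c \<and> c (snd gd) = fst gd)"
    by (intro bchoice) auto
  then obtain w where w: "\<And>g d. (g, d) \<in> S \<Longrightarrow> w (g, d) \<in> I \<and> (\<exists>c. var_expansion n (w (g, d)) (Suc d) c \<and> c d = g)"
    by fastforce
  have "g \<in> lead_coeffs n (poly_ideal (Suc n) (w ` S)) d" if gd: "(g, d) \<in> S" for g d
  proof -
    obtain c where "var_expansion n (w (g, d)) (Suc d) c" "c d = g" using w[OF gd] by blast
    moreover have "w (g, d) \<in> poly_ideal (Suc n) (w ` S)" using gd by (auto intro: poly_ideal.generator)
    ultimately show ?thesis using lead_coeffsI by fastforce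
  qed
  then show ?thesis using w assms(1) by (intro exI[of _ "w ` S"]) auto
qed

lemma subset_by_lead_coeffs:
  assumes I: "is_poly_ideal (Suc n) I" "I \<subseteq> poly_fun (Suc n)" and J: "is_poly_ideal (Suc n) J" "J \<subseteq> I"
    and lead: "\<And>d. lead_coeffs n I d \<subseteq> lead_coeffs n J d"
  shows "I \<subseteq> J"
proof -
  have "p \<in> J" if "p \<in> I" "var_expansion n p d c" for d p c
    using that
  proof (induction d arbitrary: p c)
    \<comment> \<open>subtracting an element of J with the same leading coefficient lowers the degree\<close>
    case 0
    then have "p = (\<lambda>x. 0)" unfolding var_expansion_def by auto
    then show ?case using is_poly_idealD(1)[OF J(1)] by simp
  next
    case (Suc d)
    then have "c d \<in> lead_coeffs n J d" using lead unfolding lead_coeffs_def by blast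
    then obtain w cw where w: "w \<in> J" "var_expansion n w (Suc d) cw" "c d = cw d"
      by (rule lead_coeffsE)
    have "(\<lambda>x. p x - w x) \<in> I" using is_poly_ideal_diff[OF I(1) Suc.prems(1)] w(1) J(2) by blast
    moreover have "var_expansion n (\<lambda>x. p x + - 1 * w x) d (\<lambda>k x. c k x + - 1 * cw k x)"
      by (rule var_expansion_drop_top[OF var_expansion_add[OF Suc.prems(2)
            var_expansion_mult_left[OF poly_fun.const w(2)]]]) (simp add: w(3))
    then have "var_expansion n (\<lambda>x. p x - w x) d (\<lambda>k x. c k x + - 1 * cw k x)" by simp
    ultimately have "(\<lambda>x. p x - w x) \<in> J" by (rule Suc.IH)
    from is_poly_idealD(2)[OF J(1) this w(1)] show ?case by simp
  qed
  then show ?thesis using I(2) poly_fun_Suc_has_var_expansion unfolding has_var_expansion_def by blast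
qed

lemma lead_coeffs_finite_basis:
  assumes hilbert: "\<And>Q. Q \<subseteq> poly_fun n \<Longrightarrow> \<exists>Q0\<subseteq>Q. finite Q0 \<and> Q \<subseteq> poly_ideal n Q0"
    and I: "is_poly_ideal (Suc n) I"
  shows "\<exists>P\<subseteq>I. finite P \<and> (\<forall>d. lead_coeffs n I d \<subseteq> lead_coeffs n (poly_ideal (Suc n) P) d)"
proof -
  define L where "L = lead_coeffs n I"
  have L_poly: "(\<Union>d. L d) \<subseteq> poly_fun n" "\<And>d. L d \<subseteq> poly_fun n"
    unfolding L_def using lead_coeffs_subset_poly_fun by blast+
  obtain L0 where L0: "L0 \<subseteq> (\<Union>d. L d)" "finite L0" "(\<Union>d. L d) \<subseteq> poly_ideal n L0"
    using hilbert[OF L_poly(1)] by blast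
  have "\<forall>l\<in>L0. \<exists>d. l \<in> L d" using L0(1) by blast
  then have "\<exists>deg. \<forall>l\<in>L0. l \<in> L (deg l)" by (rule bchoice)
  then obtain deg where deg: "\<And>l. l \<in> L0 \<Longrightarrow> l \<in> L (deg l)" by blast
  define D where "D = Max (insert 0 (deg ` L0))"
  have deg_le: "deg l \<le> D" if "l \<in> L0" for l unfolding D_def using that L0(2) by simp
  have "\<forall>d. \<exists>G. G \<subseteq> L d \<and> finite G \<and> L d \<subseteq> poly_ideal n G"
    using hilbert[OF L_poly(2)] by blast
  then have "\<exists>G. \<forall>d. G d \<subseteq> L d \<and> finite (G d) \<and> L d \<subseteq> poly_ideal n (G d)" by (rule choice)
  then obtain G where G: "\<And>d. G d \<subseteq> L d" "\<And>d. finite (G d)" "\<And>d. L d \<subseteq> poly_ideal n (G d)"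
    by blast
  define S where "S = (\<Union>d\<le>D. (\<lambda>g. (g, d)) ` G d) \<union> (\<lambda>l. (l, deg l)) ` L0"
  have "finite S" unfolding S_def using G(2) L0(2) by auto
  moreover have "g \<in> lead_coeffs n I d" if "(g, d) \<in> S" for g d
    using that G(1) deg unfolding S_def L_def by auto
  ultimately obtain P where P: "P \<subseteq> I" "finite P"
    and PS: "\<forall>(g, d)\<in>S. g \<in> lead_coeffs n (poly_ideal (Suc n) P) d"
    by (blast dest: lead_coeffs_witnesses)
  define J where "J = poly_ideal (Suc n) P"
  have J: "is_poly_ideal n (lead_coeffs n J d)" for d
    unfolding J_def by (rule is_poly_ideal_lead_coeffs[OF is_poly_ideal_poly_ideal])
  have "L d \<subseteq> lead_coeffs n J d" for d
  proof (cases "d \<le> D")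
    case True
    then have "G d \<subseteq> lead_coeffs n J d" using PS unfolding S_def J_def by auto
    then show ?thesis using G(3) poly_ideal_least[OF J] by blast
  next
    case False
    have "L0 \<subseteq> lead_coeffs n J d"
    proof
      fix l assume "l \<in> L0"
      then have "l \<in> lead_coeffs n J (deg l)" using PS unfolding S_def J_def by auto
      moreover have "deg l \<le> d" using deg_le[OF \<open>l \<in> L0\<close>] False by simp
      ultimately show "l \<in> lead_coeffs n J d"
        using lead_coeffs_mono[OF is_poly_ideal_poly_ideal] unfolding J_def by blast
    qed
    then show ?thesis using L0(3) poly_ideal_least[OF J] by blast
  qed
  then show ?thesis using P unfolding L_def J_def by blast
qed

lemma hilbert_basis: "Q \<subseteq> poly_fun n \<Longrightarrow> \<exists>Q0\<subseteq>Q. finite Q0 \<and> Q \<subseteq> poly_ideal n Q0"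
proof (induction n arbitrary: Q)
  case 0
  show ?case
  proof (cases "Q \<subseteq> {\<lambda>x. 0}")
    case True
    then show ?thesis by (intro exI[of _ "{}"]) (auto intro: poly_ideal.zero)
  next
    case False
    then obtain q where "q \<in> Q" "q \<noteq> (\<lambda>x. 0)" by blast
    moreover obtain c where "q = (\<lambda>x. c)" using 0 poly_fun_0_const \<open>q \<in> Q\<close> by blast
    ultimately have q: "q \<in> Q" "q = (\<lambda>x. c)" "c \<noteq> 0" by auto
    have "q' \<in> poly_ideal 0 {q}" if q': "q' \<in> Q" for q'
    proof -
      obtain c' where "q' = (\<lambda>x. c')" using 0 poly_fun_0_const q' by blast
      with q(2,3) have "q' = (\<lambda>x. c' / c * q x)" by simp
      also have "\<dots> \<in> poly_ideal 0 {q}" by (intro poly_ideal.mult poly_fun.const poly_ideal.generator) simp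
      finally show ?thesis .
    qed
    then show ?thesis using q(1) by (intro exI[of _ "{q}"]) auto
  qed
next
  case (Suc n)
  define I where "I = poly_ideal (Suc n) Q"
  have I: "is_poly_ideal (Suc n) I" "I \<subseteq> poly_fun (Suc n)"
    unfolding I_def using is_poly_ideal_poly_ideal poly_ideal_subset_poly_fun Suc.prems by blast+
  obtain P where P: "P \<subseteq> I" "finite P" "\<And>d. lead_coeffs n I d \<subseteq> lead_coeffs n (poly_ideal (Suc n) P) d"
    using lead_coeffs_finite_basis[OF Suc.IH I(1)] by blast
  have "I \<subseteq> poly_ideal (Suc n) P"
    using subset_by_lead_coeffs[OF I is_poly_ideal_poly_ideal poly_ideal_least[OF I(1) P(1)] P(3)] .
  moreover obtain Q0 where Q0: "Q0 \<subseteq> Q" "finite Q0" "P \<subseteq> poly_ideal (Suc n) Q0"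
    using finite_subset_poly_ideal[OF P(2)] P(1) unfolding I_def by blast
  moreover have "poly_ideal (Suc n) P \<subseteq> poly_ideal (Suc n) Q0"
    using poly_ideal_least[OF is_poly_ideal_poly_ideal Q0(3)] .
  moreover have "Q \<subseteq> I" unfolding I_def by (auto intro: poly_ideal.generator)
  ultimately show ?case by blast
qed

lemma zero_set_finite_basis:
  assumes "Q \<subseteq> poly_fun n"
  obtains Q0 where "Q0 \<subseteq> Q" "finite Q0" "\<And>x. \<forall>q\<in>Q0. q x = 0 \<Longrightarrow> \<forall>q\<in>Q. q x = 0"
proof -
  obtain Q0 where Q0: "Q0 \<subseteq> Q" "finite Q0" "Q \<subseteq> poly_ideal n Q0" using hilbert_basis[OF assms] by blast
  then have "\<forall>q\<in>Q. q x = 0" if "\<forall>q\<in>Q0. q x = 0" for x using poly_ideal_vanishes that by blast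
  with Q0 show thesis using that by blast
qed

section \<open>Affine charts and principal open sets\<close>

lemma algebraic_set_subset_euclid: "algebraic_set n Y \<Longrightarrow> Y \<subseteq> euclid n"
  unfolding algebraic_set_def zariski_closed_in_def by auto

locale affine_chart =
  fixes T :: "'a topology" and OX :: "'a set \<Rightarrow> ('a \<Rightarrow> real) set"
    and n :: nat and Y :: "(nat \<Rightarrow> real) set" and i :: "'a \<Rightarrow> nat \<Rightarrow> real"
  assumes embedding: "affine_embedding T OX n Y i"
begin

lemma algebraic: "algebraic_set n Y"
  using embedding unfolding affine_embedding_def by blast

lemma bij: "bij_betw i (topspace T) Y"
  using embedding unfolding affine_embedding_def by blast

lemma openin_iff: "W \<subseteq> topspace T \<Longrightarrow> openin T W \<longleftrightarrow> zariski_open_in n Y (i ` W)"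
  using embedding unfolding affine_embedding_def by blast

lemma mem_OX_iff:
  "openin T W \<Longrightarrow>
   f \<in> OX W \<longleftrightarrow> f \<in> extensional W \<and> regular_on n Y (i ` W) (\<lambda>y. f (inv_into (topspace T) i y))"
  using embedding unfolding affine_embedding_def by blast

lemma chart_in: "x \<in> topspace T \<Longrightarrow> i x \<in> Y"
  using bij by (auto simp: bij_betw_def)

lemma chart_last_zero: "x \<in> topspace T \<Longrightarrow> i x n = 0"
  using chart_in algebraic_set_subset_euclid[OF algebraic] unfolding euclid_def by blast

lemma chart_inj: "inj_on i (topspace T)"
  using bij by (simp add: bij_betw_def)

lemma chart_inv: "x \<in> topspace T \<Longrightarrow> inv_into (topspace T) i (i x) = x"
  using chart_inj by simp

lemma chart_mem_image_iff: "W \<subseteq> topspace T \<Longrightarrow> x \<in> topspace T \<Longrightarrow> i x \<in> i ` W \<longleftrightarrow> x \<in> W"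
  using chart_inj by (auto dest: inj_onD)

definition principal_open :: "((nat \<Rightarrow> real) \<Rightarrow> real) \<Rightarrow> 'a set" where
  "principal_open q = {x \<in> topspace T. q (i x) \<noteq> 0}"

lemma open_eq_union_principal:
  assumes "openin T W"
  obtains P where "P \<subseteq> poly_fun n" "W = (\<Union>p\<in>P. principal_open p)"
proof -
  have W: "W \<subseteq> topspace T" using assms by (rule openin_subset)
  then have "zariski_open_in n Y (i ` W)" using assms openin_iff by blast
  then obtain P where P: "P \<subseteq> poly_fun n" "Y - i ` W = {y \<in> Y. \<forall>p\<in>P. p y = 0}"
    unfolding zariski_open_in_def zariski_closed_in_def by blast
  have "x \<in> W \<longleftrightarrow> x \<in> (\<Union>p\<in>P. principal_open p)" if x: "x \<in> topspace T" for x
  proof -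
    have "x \<in> W \<longleftrightarrow> i x \<notin> Y - i ` W" using chart_in[OF x] chart_mem_image_iff[OF W x] by blast
    also have "\<dots> \<longleftrightarrow> (\<exists>p\<in>P. p (i x) \<noteq> 0)" unfolding P(2) using chart_in[OF x] by blast
    finally show ?thesis unfolding principal_open_def using x by blast
  qed
  then have "W = (\<Union>p\<in>P. principal_open p)" using W unfolding principal_open_def by blast
  with P(1) show thesis by (rule that)
qed

lemma union_principal_finite:
  assumes "P \<subseteq> poly_fun n"
  obtains P0 where "P0 \<subseteq> P" "finite P0" "(\<Union>p\<in>P0. principal_open p) = (\<Union>p\<in>P. principal_open p)"
proof -
  obtain P0 where P0: "P0 \<subseteq> P" "finite P0" "\<And>y. \<forall>q\<in>P0. q y = 0 \<Longrightarrow> \<forall>q\<in>P. q y = 0"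
    using zero_set_finite_basis[OF assms] by blast
  have "x \<in> (\<Union>p\<in>P0. principal_open p)" if "x \<in> (\<Union>p\<in>P. principal_open p)" for x
    using that P0(3)[of "i x"] unfolding principal_open_def by blast
  then have "(\<Union>p\<in>P0. principal_open p) = (\<Union>p\<in>P. principal_open p)" using P0(1) by blast
  with P0(1,2) show thesis by (rule that)
qed

lemma open_eq_finite_union_principal:
  assumes "openin T W"
  obtains P where "P \<subseteq> poly_fun n" "finite P" "W = (\<Union>p\<in>P. principal_open p)"
proof -
  obtain P where P: "P \<subseteq> poly_fun n" "W = (\<Union>p\<in>P. principal_open p)"
    using open_eq_union_principal[OF assms] .
  obtain P0 where P0: "P0 \<subseteq> P" "finite P0" "(\<Union>p\<in>P0. principal_open p) = (\<Union>p\<in>P. principal_open p)"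
    using union_principal_finite[OF P(1)] .
  show thesis
  proof (rule that)
    show "P0 \<subseteq> poly_fun n" using P0(1) P(1) by (rule order_trans)
    show "W = (\<Union>p\<in>P0. principal_open p)" using P(2) P0(3) by simp
  qed (rule P0(2))
qed

lemma quasi_compact:
  assumes "\<And>k. k \<in> K \<Longrightarrow> openin T (W k)"
  obtains K0 where "K0 \<subseteq> K" "finite K0" "(\<Union>k\<in>K0. W k) = (\<Union>k\<in>K. W k)"
proof -
  have "\<forall>k\<in>K. \<exists>P. P \<subseteq> poly_fun n \<and> W k = (\<Union>p\<in>P. principal_open p)"
  proof
    fix k assume "k \<in> K"
    obtain P where "P \<subseteq> poly_fun n" "W k = (\<Union>p\<in>P. principal_open p)"
      using open_eq_union_principal[OF assms[OF \<open>k \<in> K\<close>]] .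
    then show "\<exists>P. P \<subseteq> poly_fun n \<and> W k = (\<Union>p\<in>P. principal_open p)" by blast
  qed
  then have "\<exists>PP. \<forall>k\<in>K. PP k \<subseteq> poly_fun n \<and> W k = (\<Union>p\<in>PP k. principal_open p)" by (rule bchoice)
  then obtain PP where "\<forall>k\<in>K. PP k \<subseteq> poly_fun n \<and> W k = (\<Union>p\<in>PP k. principal_open p)" ..
  then have PP: "\<And>k. k \<in> K \<Longrightarrow> PP k \<subseteq> poly_fun n"
    "\<And>k. k \<in> K \<Longrightarrow> W k = (\<Union>p\<in>PP k. principal_open p)" by simp_all
  have "(\<Union>k\<in>K. PP k) \<subseteq> poly_fun n" using PP(1) by blast
  then obtain Q0 where Q0: "Q0 \<subseteq> (\<Union>k\<in>K. PP k)" "finite Q0"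
    "(\<Union>p\<in>Q0. principal_open p) = (\<Union>p\<in>(\<Union>k\<in>K. PP k). principal_open p)"
    by (rule union_principal_finite)
  have "\<forall>q\<in>Q0. \<exists>k. k \<in> K \<and> q \<in> PP k" using Q0(1) by blast
  then have "\<exists>kq. \<forall>q\<in>Q0. kq q \<in> K \<and> q \<in> PP (kq q)" by (rule bchoice)
  then obtain kq where "\<forall>q\<in>Q0. kq q \<in> K \<and> q \<in> PP (kq q)" ..
  then have kq: "\<And>q. q \<in> Q0 \<Longrightarrow> kq q \<in> K" "\<And>q. q \<in> Q0 \<Longrightarrow> q \<in> PP (kq q)" by simp_all
  have "(\<Union>k\<in>K. W k) = (\<Union>p\<in>(\<Union>k\<in>K. PP k). principal_open p)" using PP(2) by auto
  also have "\<dots> = (\<Union>p\<in>Q0. principal_open p)" using Q0(3) by simp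
  also have "\<dots> \<subseteq> (\<Union>k\<in>kq ` Q0. W k)"
  proof
    fix x assume "x \<in> (\<Union>p\<in>Q0. principal_open p)"
    then obtain q where "q \<in> Q0" "x \<in> principal_open q" by blast
    then show "x \<in> (\<Union>k\<in>kq ` Q0. W k)" using PP(2)[OF kq(1)] kq(2) by blast
  qed
  finally have "(\<Union>k\<in>K. W k) \<subseteq> (\<Union>k\<in>kq ` Q0. W k)" .
  moreover have K0: "kq ` Q0 \<subseteq> K" using kq(1) by blast
  then have "(\<Union>k\<in>kq ` Q0. W k) \<subseteq> (\<Union>k\<in>K. W k)" by (rule UN_mono) simp
  ultimately show thesis using that[OF K0] Q0(2) by blast
qed

end

locale principal_chart = affine_chart +
  fixes q :: "(nat \<Rightarrow> real) \<Rightarrow> real"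
  assumes q: "q \<in> poly_fun n"
begin

text \<open>The principal open set of q is embedded into R^(n+1) by adjoining the coordinate
  t = 1 / q, with image the algebraic set t q = 1 over Y.\<close>

definition graph_map :: "'a \<Rightarrow> nat \<Rightarrow> real" where
  "graph_map x = (i x)(n := 1 / q (i x))"

definition graph_set :: "(nat \<Rightarrow> real) set" where
  "graph_set = {y \<in> euclid (Suc n). y(n := 0) \<in> Y \<and> y n * q y = 1}"

lemma principal_open_subset: "principal_open q \<subseteq> topspace T"
  unfolding principal_open_def by auto

lemma graph_map_drop_last: "x \<in> topspace T \<Longrightarrow> (graph_map x)(n := 0) = i x"
  unfolding graph_map_def using chart_last_zero by auto

lemma poly_fun_graph_map: "p \<in> poly_fun n \<Longrightarrow> p (graph_map x) = p (i x)"
  unfolding graph_map_def using poly_fun_upd_eq by simp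

lemma chart_image_principal_open: "i ` principal_open q = {z \<in> Y. q z \<noteq> 0}"
  using bij unfolding principal_open_def bij_betw_def by auto

lemma graph_map_image:
  assumes W: "W \<subseteq> principal_open q"
  shows "graph_map ` W = {y \<in> graph_set. y(n := 0) \<in> i ` W}"
proof (intro equalityI subsetI)
  fix y assume "y \<in> graph_map ` W"
  then obtain x where x: "x \<in> W" "y = graph_map x" by blast
  then have xT: "x \<in> topspace T" "q (i x) \<noteq> 0" using W unfolding principal_open_def by auto
  have "y \<in> euclid (Suc n)"
    using chart_in[OF xT(1)] algebraic_set_subset_euclid[OF algebraic]
    unfolding x(2) graph_map_def euclid_def by auto
  moreover have "y(n := 0) = i x" using graph_map_drop_last[OF xT(1)] x(2) by simp
  moreover have "y n * q y = 1" using xT(2) poly_fun_graph_map[OF q] unfolding x(2) by (simp add: graph_map_def)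
  ultimately show "y \<in> {y \<in> graph_set. y(n := 0) \<in> i ` W}"
    unfolding graph_set_def using chart_in[OF xT(1)] x(1) by auto
next
  fix y assume y: "y \<in> {y \<in> graph_set. y(n := 0) \<in> i ` W}"
  then obtain x where x: "x \<in> W" "y(n := 0) = i x" by auto
  have "q y = q (i x)" using poly_fun_upd_eq[OF q, of y 0] x(2) by simp
  moreover have "y n * q y = 1" using y unfolding graph_set_def by auto
  ultimately have "y n = 1 / q (i x)" by (auto simp: eq_divide_eq)
  then have "graph_map x = y" unfolding graph_map_def using x(2) by (metis fun_upd_triv fun_upd_upd)
  then show "y \<in> graph_map ` W" using x(1) by blast
qed

lemma graph_map_image_principal_open: "graph_map ` principal_open q = graph_set"
proof -
  have "y(n := 0) \<in> i ` principal_open q" if "y \<in> graph_set" for y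
  proof -
    have "q (y(n := 0)) = q y" by (rule poly_fun_upd_eq[OF q])
    then show ?thesis using that unfolding chart_image_principal_open graph_set_def by auto
  qed
  then show ?thesis using graph_map_image[of "principal_open q"] by auto
qed

lemma inj_on_graph_map: "inj_on graph_map (principal_open q)"
proof (rule inj_onI)
  fix x x' assume x: "x \<in> principal_open q" "x' \<in> principal_open q" "graph_map x = graph_map x'"
  then have "x \<in> topspace T" "x' \<in> topspace T" using principal_open_subset by auto
  moreover from this have "i x = i x'" using graph_map_drop_last x(3) by metis
  ultimately show "x = x'" using chart_inj by (blast dest: inj_onD)
qed

lemma graph_map_inv: "x \<in> principal_open q \<Longrightarrow> inv_into (principal_open q) graph_map (graph_map x) = x"
  using inj_on_graph_map by simp

lemma openin_principal_open: "openin T (principal_open q)"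
proof -
  have "Y - i ` principal_open q = {z \<in> Y. \<forall>p\<in>{q}. p z = 0}" using chart_image_principal_open by auto
  moreover have "i ` principal_open q \<subseteq> Y" using chart_image_principal_open by auto
  ultimately have "zariski_open_in n Y (i ` principal_open q)"
    unfolding zariski_open_in_def zariski_closed_in_def using q by blast
  then show ?thesis using openin_iff[OF principal_open_subset] by blast
qed

lemma algebraic_set_graph_set: "algebraic_set (Suc n) graph_set"
proof -
  obtain P where P: "P \<subseteq> poly_fun n" "Y = {y \<in> euclid n. \<forall>p\<in>P. p y = 0}"
    using algebraic unfolding algebraic_set_def zariski_closed_in_def by blast
  define P' where "P' = insert (\<lambda>y. y n * q y - 1) P"
  have "P' \<subseteq> poly_fun (Suc n)" unfolding P'_def using P(1) poly_fun_Suc q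
    by (auto intro!: poly_fun_diff poly_fun.mult poly_fun.var poly_fun.const)
  moreover have "graph_set = {y \<in> euclid (Suc n). \<forall>p\<in>P'. p y = 0}"
  proof -
    have "y(n := 0) \<in> Y \<longleftrightarrow> (\<forall>p\<in>P. p y = 0)" if "y \<in> euclid (Suc n)" for y
    proof -
      have "y(n := 0) \<in> euclid n" using that unfolding euclid_def by auto
      moreover have "(\<forall>p\<in>P. p (y(n := 0)) = 0) \<longleftrightarrow> (\<forall>p\<in>P. p y = 0)"
      proof (rule ball_cong[OF refl])
        fix p assume "p \<in> P"
        then show "p (y(n := 0)) = 0 \<longleftrightarrow> p y = 0" using P(1) poly_fun_upd_eq by fastforce
      qed
      ultimately show ?thesis using P(2) by blast
    qed
    then show ?thesis unfolding graph_set_def P'_def by auto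
  qed
  ultimately show ?thesis unfolding algebraic_set_def zariski_closed_in_def by blast
qed

lemma graph_point_mem_graph_set:
  assumes "z \<in> Y" "q z \<noteq> 0"
  shows "z(n := 1 / q z) \<in> graph_set"
proof -
  have z: "z \<in> euclid n" using assms(1) algebraic_set_subset_euclid[OF algebraic] by blast
  then have "(z(n := 1 / q z))(n := 0) = z" unfolding euclid_def by auto
  moreover have "q (z(n := 1 / q z)) = q z" by (rule poly_fun_upd_eq[OF q])
  ultimately show ?thesis using assms z unfolding graph_set_def euclid_def by auto
qed

lemma graph_point_mem_image_iff:
  assumes W: "W \<subseteq> principal_open q" and z: "z \<in> Y" "q z \<noteq> 0"
  shows "z(n := 1 / q z) \<in> graph_map ` W \<longleftrightarrow> z \<in> i ` W"
proof -
  have "z n = 0" using z(1) algebraic_set_subset_euclid[OF algebraic] unfolding euclid_def by blast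
  then have "(z(n := 1 / q z))(n := 0) = z" by (simp add: fun_upd_idem)
  then show ?thesis using graph_point_mem_graph_set[OF z] unfolding graph_map_image[OF W] by simp
qed

lemma zariski_open_graph_if:
  assumes W: "W \<subseteq> principal_open q" and "zariski_open_in n Y (i ` W)"
  shows "zariski_open_in (Suc n) graph_set (graph_map ` W)"
proof -
  obtain P where P: "P \<subseteq> poly_fun n" "Y - i ` W = {z \<in> Y. \<forall>p\<in>P. p z = 0}"
    using assms(2) unfolding zariski_open_in_def zariski_closed_in_def by blast
  have "y \<notin> graph_map ` W \<longleftrightarrow> (\<forall>p\<in>P. p y = 0)" if y: "y \<in> graph_set" for y
  proof -
    have "y \<notin> graph_map ` W \<longleftrightarrow> y(n := 0) \<notin> i ` W" using graph_map_image[OF W] y by auto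
    also have "\<dots> \<longleftrightarrow> (\<forall>p\<in>P. p (y(n := 0)) = 0)" using P(2) y unfolding graph_set_def by blast
    also have "\<dots> \<longleftrightarrow> (\<forall>p\<in>P. p y = 0)"
    proof (rule ball_cong[OF refl])
      fix p assume "p \<in> P"
      then show "p (y(n := 0)) = 0 \<longleftrightarrow> p y = 0" using P(1) poly_fun_upd_eq by fastforce
    qed
    finally show ?thesis .
  qed
  then have "graph_set - graph_map ` W = {y \<in> graph_set. \<forall>p\<in>P. p y = 0}" by blast
  moreover have "graph_map ` W \<subseteq> graph_set" using graph_map_image[OF W] by blast
  moreover have "P \<subseteq> poly_fun (Suc n)" using P(1) poly_fun_Suc by blast
  ultimately show ?thesis unfolding zariski_open_in_def zariski_closed_in_def by blast
qed

lemma zariski_open_if_graph: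
  assumes W: "W \<subseteq> principal_open q" and "zariski_open_in (Suc n) graph_set (graph_map ` W)"
  shows "zariski_open_in n Y (i ` W)"
proof -
  obtain P where P: "P \<subseteq> poly_fun (Suc n)" "graph_set - graph_map ` W = {y \<in> graph_set. \<forall>p\<in>P. p y = 0}"
    using assms(2) unfolding zariski_open_in_def zariski_closed_in_def by blast
  have "\<forall>p\<in>P. \<exists>h. h \<in> poly_fun n \<and> (\<exists>m. \<forall>z. q z \<noteq> 0 \<longrightarrow> p (z(n := 1 / q z)) * q z ^ m = h z)"
  proof
    fix p assume "p \<in> P"
    then have "p \<in> poly_fun (Suc n)" using P(1) by blast
    from poly_fun_clear_denominator[OF this q]
    show "\<exists>h. h \<in> poly_fun n \<and> (\<exists>m. \<forall>z. q z \<noteq> 0 \<longrightarrow> p (z(n := 1 / q z)) * q z ^ m = h z)"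
      by blast
  qed
  then have "\<exists>h. \<forall>p\<in>P. h p \<in> poly_fun n \<and> (\<exists>m. \<forall>z. q z \<noteq> 0 \<longrightarrow> p (z(n := 1 / q z)) * q z ^ m = h p z)"
    by (rule bchoice)
  then obtain h where "\<forall>p\<in>P. h p \<in> poly_fun n \<and> (\<exists>m. \<forall>z. q z \<noteq> 0 \<longrightarrow> p (z(n := 1 / q z)) * q z ^ m = h p z)" ..
  then have h: "\<And>p. p \<in> P \<Longrightarrow> h p \<in> poly_fun n"
    "\<And>p z. p \<in> P \<Longrightarrow> q z \<noteq> 0 \<Longrightarrow> p (z(n := 1 / q z)) = 0 \<longleftrightarrow> h p z = 0"
    by (fastforce simp: power_not_zero)+
  define P' where "P' = (\<lambda>p z. q z * h p z) ` P"
  have "P' \<subseteq> poly_fun n" unfolding P'_def using h(1) q by (auto intro: poly_fun.mult)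
  moreover have "z \<notin> i ` W \<longleftrightarrow> (\<forall>p\<in>P'. p z = 0)" if z: "z \<in> Y" for z
  proof (cases "q z = 0")
    case True
    then have "z \<notin> i ` W" using W chart_image_principal_open by auto
    then show ?thesis using True unfolding P'_def by auto
  next
    case False
    have "z \<notin> i ` W \<longleftrightarrow> z(n := 1 / q z) \<notin> graph_map ` W"
      using graph_point_mem_image_iff[OF W z False] by simp
    also have "\<dots> \<longleftrightarrow> (\<forall>p\<in>P. p (z(n := 1 / q z)) = 0)"
      using P(2) graph_point_mem_graph_set[OF z False] by blast
    also have "\<dots> \<longleftrightarrow> (\<forall>p\<in>P'. p z = 0)" unfolding P'_def using h(2) False by auto
    finally show ?thesis .
  qed
  then have "Y - i ` W = {z \<in> Y. \<forall>p\<in>P'. p z = 0}" by blast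
  moreover have "i ` W \<subseteq> Y" using W principal_open_subset chart_in by blast
  ultimately show ?thesis unfolding zariski_open_in_def zariski_closed_in_def by blast
qed

lemma zariski_open_graph_iff:
  "W \<subseteq> principal_open q \<Longrightarrow> zariski_open_in n Y (i ` W) \<longleftrightarrow> zariski_open_in (Suc n) graph_set (graph_map ` W)"
  using zariski_open_graph_if zariski_open_if_graph by blast

lemma regular_on_graph_if:
  assumes W: "W \<subseteq> principal_open q"
    and reg: "regular_on n Y (i ` W) (\<lambda>z. f (inv_into (topspace T) i z))"
  shows "regular_on (Suc n) graph_set (graph_map ` W) (\<lambda>y. f (inv_into (principal_open q) graph_map y))"
  unfolding regular_on_def
proof
  fix y assume "y \<in> graph_map ` W"
  then obtain x where x: "x \<in> W" "y = graph_map x" by blast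
  then obtain N p r where N: "zariski_open_in n Y N" "i x \<in> N" "N \<subseteq> i ` W"
    and pr: "p \<in> poly_fun n" "r \<in> poly_fun n"
    and fN: "\<forall>u\<in>N. r u \<noteq> 0 \<and> f (inv_into (topspace T) i u) = p u / r u"
    using reg unfolding regular_on_def by blast
  define WN where "WN = {x \<in> W. i x \<in> N}"
  have WN: "WN \<subseteq> principal_open q" "i ` WN = N" using W N(3) unfolding WN_def by auto
  have "\<forall>u\<in>graph_map ` WN. r u \<noteq> 0 \<and> f (inv_into (principal_open q) graph_map u) = p u / r u"
  proof
    fix u assume "u \<in> graph_map ` WN"
    then obtain x' where x': "x' \<in> WN" "u = graph_map x'" by blast
    then have x'D: "x' \<in> principal_open q" and "i x' \<in> N" using WN(1) unfolding WN_def by auto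
    then have "x' \<in> topspace T" using principal_open_subset by blast
    then show "r u \<noteq> 0 \<and> f (inv_into (principal_open q) graph_map u) = p u / r u"
      using fN \<open>i x' \<in> N\<close> x'(2) poly_fun_graph_map[OF pr(1)] poly_fun_graph_map[OF pr(2)]
        graph_map_inv[OF x'D] chart_inv by auto
  qed
  moreover have "zariski_open_in (Suc n) graph_set (graph_map ` WN)"
    using zariski_open_graph_iff[OF WN(1)] WN(2) N(1) by simp
  moreover have "y \<in> graph_map ` WN" "graph_map ` WN \<subseteq> graph_map ` W"
    using x N(2) unfolding WN_def by auto
  ultimately show "\<exists>N. zariski_open_in (Suc n) graph_set N \<and> y \<in> N \<and> N \<subseteq> graph_map ` W \<and>
      (\<exists>p\<in>poly_fun (Suc n). \<exists>r\<in>poly_fun (Suc n). \<forall>u\<in>N. r u \<noteq> 0 \<and>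
         f (inv_into (principal_open q) graph_map u) = p u / r u)"
    using poly_fun_Suc[OF pr(1)] poly_fun_Suc[OF pr(2)] by (intro exI[of _ "graph_map ` WN"]) blast
qed

lemma regular_on_if_graph:
  assumes W: "W \<subseteq> principal_open q"
    and reg: "regular_on (Suc n) graph_set (graph_map ` W) (\<lambda>y. f (inv_into (principal_open q) graph_map y))"
  shows "regular_on n Y (i ` W) (\<lambda>z. f (inv_into (topspace T) i z))"
  unfolding regular_on_def
proof
  fix z assume "z \<in> i ` W"
  then obtain x where x: "x \<in> W" "z = i x" by blast
  then have "graph_map x \<in> graph_map ` W" by blast
  then obtain N p r where N: "zariski_open_in (Suc n) graph_set N" "graph_map x \<in> N" "N \<subseteq> graph_map ` W"
    and pr: "p \<in> poly_fun (Suc n)" "r \<in> poly_fun (Suc n)"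
    and fN: "\<forall>u\<in>N. r u \<noteq> 0 \<and> f (inv_into (principal_open q) graph_map u) = p u / r u"
    using reg unfolding regular_on_def by blast
  obtain hp m1 where hp: "hp \<in> poly_fun n" "\<forall>z. q z \<noteq> 0 \<longrightarrow> p (z(n := 1 / q z)) * q z ^ m1 = hp z"
    using poly_fun_clear_denominator[OF pr(1) q] by blast
  obtain hr m2 where hr: "hr \<in> poly_fun n" "\<forall>z. q z \<noteq> 0 \<longrightarrow> r (z(n := 1 / q z)) * q z ^ m2 = hr z"
    using poly_fun_clear_denominator[OF pr(2) q] by blast
  define WN where "WN = {x \<in> W. graph_map x \<in> N}"
  have WN: "WN \<subseteq> principal_open q" "graph_map ` WN = N" using W N(3) unfolding WN_def by auto
  have fWN: "\<forall>u\<in>i ` WN. hr u * q u ^ m1 \<noteq> 0 \<and>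
      f (inv_into (topspace T) i u) = hp u * q u ^ m2 / (hr u * q u ^ m1)"
  proof
    fix u assume "u \<in> i ` WN"
    then obtain x' where x': "x' \<in> WN" "u = i x'" by blast
    then have x'D: "x' \<in> principal_open q" and x'T: "x' \<in> topspace T"
      using WN(1) principal_open_subset by auto
    then have qu: "q u \<noteq> 0" using x' unfolding principal_open_def by auto
    have gx': "graph_map x' = u(n := 1 / q u)" unfolding graph_map_def x' by simp
    have "graph_map x' \<in> N" using x' unfolding WN_def by auto
    then have rn: "r (graph_map x') \<noteq> 0"
      and fv: "f (inv_into (topspace T) i u) = p (graph_map x') / r (graph_map x')"
      using fN graph_map_inv[OF x'D] chart_inv[OF x'T] x'(2) by auto
    have "hr u \<noteq> 0" using hr(2)[rule_format, OF qu] rn qu gx' by auto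
    moreover have "f (inv_into (topspace T) i u) = hp u * q u ^ m2 / (hr u * q u ^ m1)"
      unfolding fv gx' hp(2)[rule_format, OF qu, symmetric] hr(2)[rule_format, OF qu, symmetric] using qu rn gx' by (simp add: field_simps)
    ultimately show "hr u * q u ^ m1 \<noteq> 0 \<and> f (inv_into (topspace T) i u) = hp u * q u ^ m2 / (hr u * q u ^ m1)"
      using qu by simp
  qed
  have "(\<lambda>u. hp u * q u ^ m2) \<in> poly_fun n" "(\<lambda>u. hr u * q u ^ m1) \<in> poly_fun n"
    using hp(1) hr(1) q by (auto intro: poly_fun.mult poly_fun_power)
  then have "\<exists>p\<in>poly_fun n. \<exists>r\<in>poly_fun n. \<forall>u\<in>i ` WN. r u \<noteq> 0 \<and>
      f (inv_into (topspace T) i u) = p u / r u"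
    using fWN by (intro bexI[of _ "\<lambda>u. hp u * q u ^ m2"] bexI[of _ "\<lambda>u. hr u * q u ^ m1"]) auto
  moreover have "zariski_open_in n Y (i ` WN)" using zariski_open_graph_iff[OF WN(1)] WN(2) N(1) by simp
  moreover have "z \<in> i ` WN" "i ` WN \<subseteq> i ` W" using x N(2) unfolding WN_def by auto
  ultimately show "\<exists>N. zariski_open_in n Y N \<and> z \<in> N \<and> N \<subseteq> i ` W \<and>
      (\<exists>p\<in>poly_fun n. \<exists>r\<in>poly_fun n. \<forall>u\<in>N. r u \<noteq> 0 \<and> f (inv_into (topspace T) i u) = p u / r u)"
    by (intro exI[of _ "i ` WN"] conjI)
qed

lemma affine_embedding_principal_open:
  "affine_embedding (subtopology T (principal_open q)) OX (Suc n) graph_set graph_map"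
proof -
  have top: "topspace (subtopology T (principal_open q)) = principal_open q"
    using principal_open_subset by auto
  have op: "openin (subtopology T (principal_open q)) W \<longleftrightarrow> openin T W \<and> W \<subseteq> principal_open q" for W
    using openin_open_subtopology[OF openin_principal_open] .
  have "bij_betw graph_map (principal_open q) graph_set"
    unfolding bij_betw_def using inj_on_graph_map graph_map_image_principal_open by blast
  moreover have "openin (subtopology T (principal_open q)) W \<longleftrightarrow> zariski_open_in (Suc n) graph_set (graph_map ` W)"
    if W: "W \<subseteq> principal_open q" for W
  proof -
    have "openin (subtopology T (principal_open q)) W \<longleftrightarrow> openin T W" using op W by blast
    also have "\<dots> \<longleftrightarrow> zariski_open_in n Y (i ` W)"
      using openin_iff W principal_open_subset by blast
    also have "\<dots> \<longleftrightarrow> zariski_open_in (Suc n) graph_set (graph_map ` W)"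
      by (rule zariski_open_graph_iff[OF W])
    finally show ?thesis .
  qed
  moreover have "f \<in> OX W \<longleftrightarrow> f \<in> extensional W \<and>
      regular_on (Suc n) graph_set (graph_map ` W) (\<lambda>y. f (inv_into (principal_open q) graph_map y))"
    if "openin (subtopology T (principal_open q)) W" for W f
  proof -
    have W: "openin T W" "W \<subseteq> principal_open q" using op that by auto
    show ?thesis
      using mem_OX_iff[OF W(1), of f] regular_on_graph_if[OF W(2), of f] regular_on_if_graph[OF W(2), of f]
      by blast
  qed
  ultimately show ?thesis unfolding affine_embedding_def top using algebraic_set_graph_set by blast
qed

end

section \<open>Tempered functions\<close>

lemma sqnorm_upd_last: "sqnorm n (y(n := a)) = sqnorm n y"
  unfolding sqnorm_def by (rule sum.cong) auto

lemma sqnorm_le_Suc: "sqnorm n z \<le> sqnorm (Suc n) z"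
  unfolding sqnorm_def by simp

lemma sqnorm_nonneg: "0 \<le> sqnorm n z"
  unfolding sqnorm_def by (simp add: sum_nonneg)

lemma euclid_Suc_drop_last: "y \<in> euclid (Suc n) \<Longrightarrow> y(n := 0) \<in> euclid n"
  unfolding euclid_def by auto

lemma cont_on_euclid_drop_last:
  assumes "cont_on_euclid n G"
  shows "cont_on_euclid (Suc n) (\<lambda>y. G (y(n := 0)))"
  unfolding cont_on_euclid_def
proof (intro ballI allI impI)
  fix x :: "nat \<Rightarrow> real" and e :: real assume x: "x \<in> euclid (Suc n)" and "e > 0"
  then obtain d where d: "d > 0" "\<forall>y\<in>euclid n. sqrt (sqnorm n (\<lambda>i. y i - (x(n := 0)) i)) < d \<longrightarrow>
      \<bar>G y - G (x(n := 0))\<bar> < e"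
    using assms euclid_Suc_drop_last unfolding cont_on_euclid_def by blast
  have "\<bar>G (y(n := 0)) - G (x(n := 0))\<bar> < e"
    if y: "y \<in> euclid (Suc n)" and "sqrt (sqnorm (Suc n) (\<lambda>i. y i - x i)) < d" for y
  proof -
    have "(\<lambda>i. (y(n := 0)) i - (x(n := 0)) i) = (\<lambda>i. y i - x i)(n := 0)" by auto
    then have "sqnorm n (\<lambda>i. (y(n := 0)) i - (x(n := 0)) i) \<le> sqnorm (Suc n) (\<lambda>i. y i - x i)"
      using sqnorm_upd_last sqnorm_le_Suc by metis
    then have "sqrt (sqnorm n (\<lambda>i. (y(n := 0)) i - (x(n := 0)) i)) < d"
      using that(2) by (meson real_sqrt_le_mono le_less_trans)
    then show ?thesis using d(2) euclid_Suc_drop_last[OF y] by blast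
  qed
  with d(1) show "\<exists>d>0. \<forall>y\<in>euclid (Suc n). sqrt (sqnorm (Suc n) (\<lambda>i. y i - x i)) < d \<longrightarrow>
      \<bar>G (y(n := 0)) - G (x(n := 0))\<bar> < e" by blast
qed

lemma poly_bounded_drop_last:
  assumes "\<forall>x\<in>euclid n. \<bar>G x\<bar> \<le> C * (1 + sqnorm n x) ^ N"
  shows "\<forall>x\<in>euclid (Suc n). \<bar>G (x(n := 0))\<bar> \<le> \<bar>C\<bar> * (1 + sqnorm (Suc n) x) ^ N"
proof
  fix x :: "nat \<Rightarrow> real" assume x: "x \<in> euclid (Suc n)"
  have "\<bar>G (x(n := 0))\<bar> \<le> C * (1 + sqnorm n x) ^ N"
    using assms euclid_Suc_drop_last[OF x] sqnorm_upd_last by metis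
  also have "\<dots> \<le> \<bar>C\<bar> * (1 + sqnorm n x) ^ N"
    by (rule mult_right_mono) (auto simp: sqnorm_nonneg)
  also have "\<dots> \<le> \<bar>C\<bar> * (1 + sqnorm (Suc n) x) ^ N"
    by (intro mult_left_mono power_mono) (auto simp: sqnorm_le_Suc sqnorm_nonneg)
  finally show "\<bar>G (x(n := 0))\<bar> \<le> \<bar>C\<bar> * (1 + sqnorm (Suc n) x) ^ N" .
qed

lemma tempered_drop_last:
  assumes "tempered n F"
  shows "tempered (Suc n) (\<lambda>y. F (y(n := 0)))"
proof -
  obtain D where D0: "D [] = F" and D: "\<And>\<alpha>. set \<alpha> \<subseteq> {..<n} \<Longrightarrow>
      cont_on_euclid n (D \<alpha>) \<and>
      (\<forall>i<n. \<forall>x\<in>euclid n. ((\<lambda>t. D \<alpha> (x(i := x i + t))) has_real_derivative D (i # \<alpha>) x) (at 0)) \<and>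
      (\<exists>C N. \<forall>x\<in>euclid n. \<bar>D \<alpha> x\<bar> \<le> C * (1 + sqnorm n x) ^ N)"
    using assms unfolding tempered_def by blast
  \<comment> \<open>every derivative involving the new variable vanishes\<close>
  define D' where "D' \<alpha> = (if n \<in> set \<alpha> then (\<lambda>_. 0) else (\<lambda>y. D \<alpha> (y(n := 0))))" for \<alpha>
  have "cont_on_euclid (Suc n) (D' \<alpha>) \<and>
      (\<forall>i<Suc n. \<forall>x\<in>euclid (Suc n). ((\<lambda>t. D' \<alpha> (x(i := x i + t))) has_real_derivative D' (i # \<alpha>) x) (at 0)) \<and>
      (\<exists>C N. \<forall>x\<in>euclid (Suc n). \<bar>D' \<alpha> x\<bar> \<le> C * (1 + sqnorm (Suc n) x) ^ N)"
    if \<alpha>: "set \<alpha> \<subseteq> {..<Suc n}" for \<alpha>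
  proof (cases "n \<in> set \<alpha>")
    case True
    then have "D' \<alpha> = (\<lambda>_. 0)" "\<And>i. D' (i # \<alpha>) = (\<lambda>_. 0)" unfolding D'_def by simp_all
    then show ?thesis unfolding cont_on_euclid_def by (auto intro!: exI[of _ 0])
  next
    case False
    then have "set \<alpha> \<subseteq> {..<n}" using \<alpha> by (auto simp: less_Suc_eq)
    note D\<alpha> = D[OF this]
    have D'\<alpha>: "D' \<alpha> = (\<lambda>y. D \<alpha> (y(n := 0)))" unfolding D'_def using False by simp
    have "cont_on_euclid (Suc n) (D' \<alpha>)"
      unfolding D'\<alpha> using D\<alpha> by (blast intro: cont_on_euclid_drop_last)
    moreover have "((\<lambda>t. D' \<alpha> (x(i := x i + t))) has_real_derivative D' (i # \<alpha>) x) (at 0)"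
      if i: "i < Suc n" and x: "x \<in> euclid (Suc n)" for i x
    proof (cases "i = n")
      case True
      then show ?thesis unfolding D'\<alpha> by (simp add: D'_def)
    next
      case False
      with i have "i < n" by simp
      then have deriv: "((\<lambda>t. D \<alpha> ((x(n := 0))(i := (x(n := 0)) i + t))) has_real_derivative
          D (i # \<alpha>) (x(n := 0))) (at 0)"
        using conjunct1[OF conjunct2[OF D\<alpha>]] euclid_Suc_drop_last[OF x] by blast
      have "(\<lambda>t. D' \<alpha> (x(i := x i + t))) = (\<lambda>t. D \<alpha> ((x(n := 0))(i := (x(n := 0)) i + t)))"
        unfolding D'\<alpha> using False by (simp add: fun_upd_twist)
      moreover have "D' (i # \<alpha>) x = D (i # \<alpha>) (x(n := 0))"
        unfolding D'_def using False \<open>n \<notin> set \<alpha>\<close> by simp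
      ultimately show ?thesis using deriv by simp
    qed
    moreover obtain C N where "\<forall>x\<in>euclid n. \<bar>D \<alpha> x\<bar> \<le> C * (1 + sqnorm n x) ^ N"
      using D\<alpha> by blast
    then have "\<forall>x\<in>euclid (Suc n). \<bar>D' \<alpha> x\<bar> \<le> \<bar>C\<bar> * (1 + sqnorm (Suc n) x) ^ N"
      unfolding D'\<alpha> by (rule poly_bounded_drop_last)
    ultimately show ?thesis by blast
  qed
  moreover have "D' [] = (\<lambda>y. F (y(n := 0)))" unfolding D'_def D0 by simp
  ultimately show ?thesis unfolding tempered_def by blast
qed

lemma (in affine_chart) tempered_restrict_open:
  assumes F: "tempered n F" and f: "\<forall>x\<in>topspace T. f x = F (i x)" and U: "openin T U"
  obtains \<V> where "finite \<V>" "\<Union>\<V> = U"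
    "\<forall>V\<in>\<V>. openin T V \<and> affine_variety (subtopology T V) OX \<and>
                   tempered_affine (subtopology T V) OX (restrict f V)"
proof -
  obtain P where P: "P \<subseteq> poly_fun n" "finite P" "U = (\<Union>p\<in>P. principal_open p)"
    using open_eq_finite_union_principal[OF U] .
  have charts: "openin T V \<and> affine_variety (subtopology T V) OX \<and> tempered_affine (subtopology T V) OX (restrict f V)"
    if "V \<in> principal_open ` P" for V
  proof -
    obtain q where qP: "q \<in> P" "V = principal_open q" using \<open>V \<in> principal_open ` P\<close> by blast
    interpret principal_chart T OX n Y i q using P(1) qP(1) by unfold_locales blast
    have "\<forall>x\<in>principal_open q. restrict f V x = F ((graph_map x)(n := 0))"
      using f graph_map_drop_last principal_open_subset qP(2) by auto
    then have "tempered_affine (subtopology T V) OX (restrict f V)"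
      unfolding tempered_affine_def qP(2) using affine_embedding_principal_open tempered_drop_last[OF F]
        principal_open_subset by (intro exI conjI) auto
    then show ?thesis using openin_principal_open affine_embedding_principal_open qP(2)
      unfolding affine_variety_def by blast
  qed
  have "finite (principal_open ` P)" "\<Union>(principal_open ` P) = U" using P(2,3) by auto
  then show thesis using charts by (intro that) auto
qed

lemma algebraic_variety_quasi_compact:
  assumes X: "algebraic_variety X OX" and W: "\<And>k. k \<in> K \<Longrightarrow> openin X (W k)"
  obtains K0 where "K0 \<subseteq> K" "finite K0" "(\<Union>k\<in>K0. W k) = (\<Union>k\<in>K. W k)"
proof -
  obtain \<A> where A: "finite \<A>" "\<Union>\<A> = topspace X"
    "\<And>A. A \<in> \<A> \<Longrightarrow> openin X A \<and> affine_variety (subtopology X A) OX"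
    using X unfolding algebraic_variety_def by blast
  have "\<forall>A\<in>\<A>. \<exists>K0. K0 \<subseteq> K \<and> finite K0 \<and> (\<Union>k\<in>K0. W k \<inter> A) = (\<Union>k\<in>K. W k \<inter> A)"
  proof
    fix A assume "A \<in> \<A>"
    then obtain n Y i where "affine_embedding (subtopology X A) OX n Y i"
      using A(3) unfolding affine_variety_def by blast
    then interpret affine_chart "subtopology X A" OX n Y i by unfold_locales
    have WA: "openin (subtopology X A) (W k \<inter> A)" if "k \<in> K" for k
      using W[OF that] by (rule openin_subtopology_Int)
    obtain K0 where "K0 \<subseteq> K" "finite K0" "(\<Union>k\<in>K0. W k \<inter> A) = (\<Union>k\<in>K. W k \<inter> A)"
      using quasi_compact[of K "\<lambda>k. W k \<inter> A", OF WA] .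
    then show "\<exists>K0. K0 \<subseteq> K \<and> finite K0 \<and> (\<Union>k\<in>K0. W k \<inter> A) = (\<Union>k\<in>K. W k \<inter> A)" by blast
  qed
  then have "\<exists>KA. \<forall>A\<in>\<A>. KA A \<subseteq> K \<and> finite (KA A) \<and> (\<Union>k\<in>KA A. W k \<inter> A) = (\<Union>k\<in>K. W k \<inter> A)"
    by (rule bchoice)
  then obtain KA where "\<forall>A\<in>\<A>. KA A \<subseteq> K \<and> finite (KA A) \<and> (\<Union>k\<in>KA A. W k \<inter> A) = (\<Union>k\<in>K. W k \<inter> A)" ..
  then have KA: "\<And>A. A \<in> \<A> \<Longrightarrow> KA A \<subseteq> K" "\<And>A. A \<in> \<A> \<Longrightarrow> finite (KA A)"
    "\<And>A. A \<in> \<A> \<Longrightarrow> (\<Union>k\<in>KA A. W k \<inter> A) = (\<Union>k\<in>K. W k \<inter> A)"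
    by simp_all
  have cover: "(\<Union>k\<in>K. W k) \<subseteq> (\<Union>k\<in>(\<Union>A\<in>\<A>. KA A). W k)"
  proof
    fix x assume "x \<in> (\<Union>k\<in>K. W k)"
    then obtain k where k: "k \<in> K" "x \<in> W k" by blast
    then obtain A where A': "A \<in> \<A>" "x \<in> A" using A(2) W openin_subset by blast
    then have "x \<in> (\<Union>k\<in>KA A. W k \<inter> A)" unfolding KA(3)[OF A'(1)] using k by blast
    then show "x \<in> (\<Union>k\<in>(\<Union>A\<in>\<A>. KA A). W k)" using A'(1) by blast
  qed
  have sub: "(\<Union>A\<in>\<A>. KA A) \<subseteq> K" using KA(1) by blast
  then have "(\<Union>k\<in>(\<Union>A\<in>\<A>. KA A). W k) \<subseteq> (\<Union>k\<in>K. W k)" by (rule UN_mono) simp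
  then have "(\<Union>k\<in>(\<Union>A\<in>\<A>. KA A). W k) = (\<Union>k\<in>K. W k)" using cover by (rule antisym)
  moreover have "finite (\<Union>A\<in>\<A>. KA A)" using KA(2) A(1) by blast
  ultimately show thesis using sub by (intro that)
qed

section \<open>The sheaf of tempered functions\<close>

definition tempered_chart :: "'a topology \<Rightarrow> ('a set \<Rightarrow> ('a \<Rightarrow> real) set) \<Rightarrow> ('a \<Rightarrow> real) \<Rightarrow> 'a set \<Rightarrow> bool" where
  "tempered_chart X OX t W \<longleftrightarrow>
     openin X W \<and> affine_variety (subtopology X W) OX \<and> tempered_affine (subtopology X W) OX (restrict t W)"

lemma tempered_chart_cong: "restrict s W = restrict t W \<Longrightarrow> tempered_chart X OX s W = tempered_chart X OX t W"
  unfolding tempered_chart_def by simp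

lemma mem_tempered_fns_subtopology:
  assumes U: "openin X U"
  shows "t \<in> tempered_fns (subtopology X U) OX \<longleftrightarrow>
    t \<in> extensional U \<and> (\<exists>\<U>. finite \<U> \<and> \<Union>\<U> = U \<and> (\<forall>W\<in>\<U>. tempered_chart X OX t W))"
proof -
  have top: "topspace (subtopology X U) = U" using openin_subset[OF U] by (simp add: Int_absorb1)
  have chart: "(openin (subtopology X U) W \<and> affine_variety (subtopology (subtopology X U) W) OX \<and>
      tempered_affine (subtopology (subtopology X U) W) OX (restrict t W)) \<longleftrightarrow>
      tempered_chart X OX t W \<and> W \<subseteq> U" for W
  proof (cases "W \<subseteq> U")
    case True
    then have "subtopology (subtopology X U) W = subtopology X W"
      by (simp add: subtopology_subtopology inf.absorb2)
    then show ?thesis using openin_open_subtopology[OF U] True unfolding tempered_chart_def by simp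
  next
    case False
    then show ?thesis using openin_open_subtopology[OF U] by blast
  qed
  have covers: "(\<forall>W\<in>\<U>. tempered_chart X OX t W \<and> W \<subseteq> U) \<longleftrightarrow> (\<forall>W\<in>\<U>. tempered_chart X OX t W)"
    if "\<Union>\<U> = U" for \<U>
    using that by blast
  show ?thesis unfolding tempered_fns_def top mem_Collect_eq chart
    by (intro conj_cong refl ex_cong1) (rule covers)
qed

lemma tempered_chart_restrict_open:
  assumes W: "tempered_chart X OX t W" and U: "openin X U"
  obtains \<V> where "finite \<V>" "\<Union>\<V> = W \<inter> U" "\<forall>V\<in>\<V>. tempered_chart X OX t V"
proof -
  obtain n Y i F where "affine_embedding (subtopology X W) OX n Y i" and F: "tempered n F"
    and tF: "\<forall>x\<in>topspace (subtopology X W). restrict t W x = F (i x)"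
    using W unfolding tempered_chart_def tempered_affine_def by blast
  then interpret affine_chart "subtopology X W" OX n Y i by unfold_locales
  have oW: "openin X W" using W unfolding tempered_chart_def by blast
  obtain \<V> where \<V>: "finite \<V>" "\<Union>\<V> = W \<inter> U"
    and charts: "\<forall>V\<in>\<V>. openin (subtopology X W) V \<and> affine_variety (subtopology (subtopology X W) V) OX \<and>
                   tempered_affine (subtopology (subtopology X W) V) OX (restrict (restrict t W) V)"
    using tempered_restrict_open[OF F tF openin_subtopology_Int2[OF U]] .
  have "tempered_chart X OX t V" if "V \<in> \<V>" for V
  proof -
    have "V \<subseteq> W" using \<V>(2) that by blast
    then have "subtopology (subtopology X W) V = subtopology X V" "restrict (restrict t W) V = restrict t V"
      by (auto simp: subtopology_subtopology inf.absorb2 Int_absorb1)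
    moreover have "openin X V" using charts[rule_format, OF that] openin_open_subtopology[OF oW] by blast
    ultimately show ?thesis using charts[rule_format, OF that] unfolding tempered_chart_def by simp
  qed
  with \<V> show thesis by (intro that) auto
qed

lemma tempered_fns_subtopologyE:
  assumes "openin X U" "t \<in> tempered_fns (subtopology X U) OX"
  obtains \<U> where "finite \<U>" "\<Union>\<U> = U" "\<forall>W\<in>\<U>. tempered_chart X OX t W"
proof -
  have "\<exists>\<U>. finite \<U> \<and> \<Union>\<U> = U \<and> (\<forall>W\<in>\<U>. tempered_chart X OX t W)"
    using assms(2) unfolding mem_tempered_fns_subtopology[OF assms(1)] by (rule conjunct2)
  then obtain \<U> where "finite \<U> \<and> \<Union>\<U> = U \<and> (\<forall>W\<in>\<U>. tempered_chart X OX t W)" ..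
  then have "finite \<U>" "\<Union>\<U> = U" "\<forall>W\<in>\<U>. tempered_chart X OX t W" by simp_all
  then show thesis by (rule that)
qed

lemma tempered_fns_subset_extensional: "openin X U \<Longrightarrow> tempered_fns (subtopology X U) OX \<subseteq> extensional U"
  using mem_tempered_fns_subtopology by blast

lemma restrict_mem_tempered_fns:
  assumes U: "openin X U" and V: "openin X V" and "U \<subseteq> V" and f: "f \<in> tempered_fns (subtopology X V) OX"
  shows "restrict f U \<in> tempered_fns (subtopology X U) OX"
proof -
  obtain \<U> where \<U>: "finite \<U>" "\<Union>\<U> = V" "\<forall>W\<in>\<U>. tempered_chart X OX f W"
    using tempered_fns_subtopologyE[OF V f] .
  have "\<forall>W\<in>\<U>. \<exists>\<V>. finite \<V> \<and> \<Union>\<V> = W \<inter> U \<and> (\<forall>V'\<in>\<V>. tempered_chart X OX f V')"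
  proof
    fix W assume "W \<in> \<U>"
    obtain \<V> where "finite \<V>" "\<Union>\<V> = W \<inter> U" "\<forall>V'\<in>\<V>. tempered_chart X OX f V'"
      using tempered_chart_restrict_open[OF \<U>(3)[rule_format, OF \<open>W \<in> \<U>\<close>] U] .
    then show "\<exists>\<V>. finite \<V> \<and> \<Union>\<V> = W \<inter> U \<and> (\<forall>V'\<in>\<V>. tempered_chart X OX f V')"
      by (intro exI[of _ \<V>] conjI)
  qed
  then have "\<exists>\<V>. \<forall>W\<in>\<U>. finite (\<V> W) \<and> \<Union>(\<V> W) = W \<inter> U \<and> (\<forall>V'\<in>\<V> W. tempered_chart X OX f V')"
    by (rule bchoice)
  then obtain \<V> where "\<forall>W\<in>\<U>. finite (\<V> W) \<and> \<Union>(\<V> W) = W \<inter> U \<and> (\<forall>V'\<in>\<V> W. tempered_chart X OX f V')" ..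
  then have \<V>: "\<And>W. W \<in> \<U> \<Longrightarrow> finite (\<V> W)" "\<And>W. W \<in> \<U> \<Longrightarrow> \<Union>(\<V> W) = W \<inter> U"
    "\<And>W V'. W \<in> \<U> \<Longrightarrow> V' \<in> \<V> W \<Longrightarrow> tempered_chart X OX f V'"
    by simp_all
  have "finite (\<Union>W\<in>\<U>. \<V> W)" using \<U>(1) \<V>(1) by blast
  moreover have "\<Union>(\<Union>W\<in>\<U>. \<V> W) = U"
  proof -
    have "\<Union>(\<Union>W\<in>\<U>. \<V> W) = (\<Union>W\<in>\<U>. \<Union>(\<V> W))" by blast
    also have "\<dots> = (\<Union>W\<in>\<U>. W \<inter> U)" using \<V>(2) by simp
    also have "\<dots> = U" using \<U>(2) \<open>U \<subseteq> V\<close> by blast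
    finally show ?thesis .
  qed
  moreover have "tempered_chart X OX (restrict f U) V'" if V': "V' \<in> (\<Union>W\<in>\<U>. \<V> W)" for V'
  proof -
    obtain W where W: "W \<in> \<U>" "V' \<in> \<V> W" using V' by blast
    then have "V' \<subseteq> U" using \<V>(2) by blast
    then have "restrict (restrict f U) V' = restrict f V'" by (simp add: Int_absorb1)
    then show ?thesis using \<V>(3)[OF W] tempered_chart_cong by blast
  qed
  ultimately show ?thesis unfolding mem_tempered_fns_subtopology[OF U] by blast
qed

lemma tempered_fns_eqI:
  assumes V: "openin X V" and "\<Union>\<U> = V"
    and f: "f \<in> tempered_fns (subtopology X V) OX" and g: "g \<in> tempered_fns (subtopology X V) OX"
    and eq: "\<forall>U\<in>\<U>. restrict f U = restrict g U"
  shows "f = g"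
proof (rule extensionalityI)
  show "f \<in> extensional V" "g \<in> extensional V"
    using f g tempered_fns_subset_extensional[OF V] by blast+
next
  fix x assume "x \<in> V"
  then obtain U where "U \<in> \<U>" "x \<in> U" using \<open>\<Union>\<U> = V\<close> by blast
  then show "f x = g x" using eq by (metis restrict_apply')
qed

lemma mem_tempered_fns_if_local:
  assumes X: "algebraic_variety X OX" and V: "openin X V" and t: "t \<in> extensional V"
    and local: "\<And>x. x \<in> V \<Longrightarrow> \<exists>W. x \<in> W \<and> W \<subseteq> V \<and> tempered_chart X OX t W"
  shows "t \<in> tempered_fns (subtopology X V) OX"
proof -
  define K where "K = {W. W \<subseteq> V \<and> tempered_chart X OX t W}"
  have "\<And>W. W \<in> K \<Longrightarrow> openin X W" unfolding K_def tempered_chart_def by blast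
  then obtain K0 where K0: "K0 \<subseteq> K" "finite K0" "(\<Union>W\<in>K0. W) = (\<Union>W\<in>K. W)"
    by (rule algebraic_variety_quasi_compact[OF X])
  have "\<Union>K = V" using local unfolding K_def by blast
  then have "\<Union>K0 = V" using K0(3) by simp
  moreover have "\<forall>W\<in>K0. tempered_chart X OX t W" using K0(1) unfolding K_def by blast
  ultimately show ?thesis unfolding mem_tempered_fns_subtopology[OF V] using t K0(2) by blast
qed

text \<open>Any member of the cover containing x may be chosen; for compatible families the choice
  is immaterial.\<close>

definition glue :: "'a set set \<Rightarrow> ('a set \<Rightarrow> 'a \<Rightarrow> 'b) \<Rightarrow> 'a \<Rightarrow> 'b" where
  "glue \<U> s = restrict (\<lambda>x. s (SOME U. U \<in> \<U> \<and> x \<in> U) x) (\<Union>\<U>)"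

lemma restrict_glue:
  assumes ext: "\<forall>U\<in>\<U>. s U \<in> extensional U"
    and compat: "\<forall>U\<in>\<U>. \<forall>U'\<in>\<U>. restrict (s U) (U \<inter> U') = restrict (s U') (U \<inter> U')"
    and U: "U \<in> \<U>"
  shows "restrict (glue \<U> s) U = s U"
proof
  fix x
  show "restrict (glue \<U> s) U x = s U x"
  proof (cases "x \<in> U")
    case True
    define U' where "U' = (SOME U. U \<in> \<U> \<and> x \<in> U)"
    have "U' \<in> \<U> \<and> x \<in> U'" unfolding U'_def by (rule someI[of _ U]) (use U True in blast)
    then have "s U' x = s U x" using compat U True by (metis IntI restrict_apply')
    moreover have "glue \<U> s x = s U' x" unfolding glue_def U'_def using U True by auto
    ultimately show ?thesis using True by simp
  next
    case False
    then show ?thesis using ext U by (simp add: extensional_def)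
  qed
qed

lemma glue_mem_tempered_fns:
  assumes X: "algebraic_variety X OX" and V: "openin X V"
    and \<U>: "\<forall>U\<in>\<U>. openin X U" "\<Union>\<U> = V" and s: "\<forall>U\<in>\<U>. s U \<in> tempered_fns (subtopology X U) OX"
    and compat: "\<forall>U\<in>\<U>. \<forall>U'\<in>\<U>. restrict (s U) (U \<inter> U') = restrict (s U') (U \<inter> U')"
  shows "glue \<U> s \<in> tempered_fns (subtopology X V) OX" "\<forall>U\<in>\<U>. restrict (glue \<U> s) U = s U"
proof -
  have "\<forall>U\<in>\<U>. s U \<in> extensional U" using s \<U>(1) tempered_fns_subset_extensional by blast
  then show restr: "\<forall>U\<in>\<U>. restrict (glue \<U> s) U = s U" using restrict_glue compat by blast
  have "\<exists>W. x \<in> W \<and> W \<subseteq> V \<and> tempered_chart X OX (glue \<U> s) W" if "x \<in> V" for x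
  proof -
    obtain U where U: "U \<in> \<U>" "x \<in> U" using \<open>x \<in> V\<close> \<U>(2) by blast
    obtain \<W> where \<W>: "\<Union>\<W> = U" "\<forall>W\<in>\<W>. tempered_chart X OX (s U) W"
      using tempered_fns_subtopologyE[of X U "s U" OX] \<U>(1) s U(1) by blast
    then obtain W where W: "W \<in> \<W>" "x \<in> W" using U(2) by blast
    then have "W \<subseteq> U" using \<W>(1) by blast
    then have "restrict (glue \<U> s) W = restrict (s U) W"
      using restr U(1) by (metis Int_absorb1 restrict_restrict)
    then have "tempered_chart X OX (glue \<U> s) W" using \<W>(2) W(1) tempered_chart_cong by blast
    then show ?thesis using W(2) \<open>W \<subseteq> U\<close> U(1) \<U>(2) by blast
  qed
  then show "glue \<U> s \<in> tempered_fns (subtopology X V) OX"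
    unfolding glue_def \<U>(2)[symmetric] using mem_tempered_fns_if_local[OF X V] \<U>(2) by auto
qed

theorem proposition5p11:
  fixes X :: "'a topology" and OX :: "'a set \<Rightarrow> ('a \<Rightarrow> real) set"
  assumes "algebraic_variety X OX"
  shows "sheaf_fun X (\<lambda>U. tempered_fns (subtopology X U) OX)"
  unfolding sheaf_fun_def
proof (intro conjI allI impI; (elim conjE)?)
  fix U assume "openin X U"
  then show "tempered_fns (subtopology X U) OX \<subseteq> extensional U" by (rule tempered_fns_subset_extensional)
next
  fix U V f assume "openin X U" "openin X V" "U \<subseteq> V" "f \<in> tempered_fns (subtopology X V) OX"
  then show "restrict f U \<in> tempered_fns (subtopology X U) OX" by (rule restrict_mem_tempered_fns)
next
  fix V \<U> f g assume "openin X V" "\<forall>U\<in>\<U>. openin X U" "\<Union>\<U> = V"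
    "f \<in> tempered_fns (subtopology X V) OX" "g \<in> tempered_fns (subtopology X V) OX"
    "\<forall>U\<in>\<U>. restrict f U = restrict g U"
  then show "f = g" using tempered_fns_eqI by metis
next
  fix V \<U> s assume "openin X V" "\<forall>U\<in>\<U>. openin X U" "\<Union>\<U> = V"
    "\<forall>U\<in>\<U>. s U \<in> tempered_fns (subtopology X U) OX"
    "\<forall>U\<in>\<U>. \<forall>U'\<in>\<U>. restrict (s U) (U \<inter> U') = restrict (s U') (U \<inter> U')"
  from glue_mem_tempered_fns[OF assms this]
  show "\<exists>f\<in>tempered_fns (subtopology X V) OX. \<forall>U\<in>\<U>. restrict f U = s U" by blast
qed

end
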